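(* Let $A=\mathrm{Circ}(a_0,\dots,a_{n-1})\neq 0$, and let $p_1>p_2>\dots>p_s$ be all the indices in $\{1,\dots,n-1\}$ with $a_{p_1}=\dots=a_{p_s}=\lambda(A)$ (possibly $s=0$). Then: (i) the critical digraph $\mathcal{C}(A)$ consists of $m=\gcd(n,p_1,\dots,p_s)$ isomorphic strongly connected components, and for $i\in\{1,\dots,m\}$ the node set of the $i$-th component is $\{i,i+m,\dots,i+(n/m-1)m\}$; (ii) $\mathrm{per}(A)$, which equals the cyclicity of each of these components, is $1$ if $a_0=\lambda(A)$, and if $a_0\neq\lambda(A)$ then $$\mathrm{per}(A)=\gcd\Big(\tfrac{n}{\gcd(n,p_1)},\tfrac{p_1-p_2}{\gcd(p_1,p_2)},\tfrac{p_1-p_3}{\gcd(p_1,p_3)},\dots,\tfrac{p_1-p_s}{\gcd(p_1,p_s)}\Big)$$ $$=\gcd\Big(\tfrac{n}{\gcd(n,p_1)},\tfrac{p_1-p_2}{\gcd(p_1,p_2)},\tfrac{p_2-p_3}{\gcd(p_2,p_3)},\dots,\tfrac{p_{s-1}-p_s}{\gcd(p_{s-1},p_s)}\Big)$$ $$=\gcd\Big(\tfrac{n}{\gcd(n,p_1)},\tfrac{p_1-p_2}{\gcd(n,p_1,p_2)},\tfrac{p_1-p_3}{\gcd(n,p_1,p_2,p_3)},\dots,\tfrac{p_1-p_s}{\gcd(n,p_1,\dots,p_s)}\Big).$$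
   Context: Max algebra on $\mathbb{R}_+$ with $a\oplus b=\max(a,b)$ and ordinary product; $A^t$ is the max-algebraic power. $A=\mathrm{Circ}(a_0,\dots,a_{n-1})$ means $A_{i,j}=a_t$ with $t\in\{0,\dots,n-1\}$, $t\equiv j-i\pmod n$. The digraph $\mathcal{G}(A)$ has nodes $\{1,\dots,n\}$ and edges $(i,j)$ with $A_{i,j}\neq0$, weight $A_{i,j}$; a cycle's mean is the geometric mean of its edge weights; $\lambda(A)$ is the maximum cycle geometric mean (= largest max-algebraic eigenvalue). The critical digraph $\mathcal{C}(A)$ consists of all nodes and edges of the cycles of $\mathcal{G}(A)$ attaining mean $\lambda(A)$. The cyclicity of a strongly connected digraph is the gcd of its cycle lengths; of a digraph that is a disjoint union of strongly connected components with no walks between components, it is the lcm of the components' cyclicities. For $\lambda(A)\ne0$, $\mathrm{per}(A)$ is the ultimate period of the sequence $\{(A/\lambda(A))^t\}_{t\ge1}$, i.e. the least $\sigma$ such that $(A/\lambda(A))^{t+\sigma}=(A/\lambda(A))^t$ for all sufficiently large $t$. *)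

theory Defs
  imports Complex_Main
begin

text \<open>Square matrices over the nonnegative reals of size n are functions
  nat \<Rightarrow> nat \<Rightarrow> real; only indices in {1..n} are relevant.\<close>

definition circ :: "nat \<Rightarrow> (nat \<Rightarrow> real) \<Rightarrow> nat \<Rightarrow> nat \<Rightarrow> real" where
  "circ n a i j = a ((j + n - i) mod n)"

fun mpow :: "nat \<Rightarrow> (nat \<Rightarrow> nat \<Rightarrow> real) \<Rightarrow> nat \<Rightarrow> nat \<Rightarrow> nat \<Rightarrow> real" where
  "mpow n A 0 = (\<lambda>i j. if i = j then 1 else 0)"
| "mpow n A (Suc t) = (\<lambda>i j. Max ((\<lambda>k. mpow n A t i k * A k j) ` {1..n}))"

definition graph_edges :: "nat \<Rightarrow> (nat \<Rightarrow> nat \<Rightarrow> real) \<Rightarrow> (nat \<times> nat) set" where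
  "graph_edges n A = {(i, j). i \<in> {1..n} \<and> j \<in> {1..n} \<and> A i j \<noteq> 0}"

definition cycle_in :: "(nat \<times> nat) set \<Rightarrow> nat list \<Rightarrow> bool" where
  "cycle_in E c \<longleftrightarrow> c \<noteq> [] \<and> distinct c \<and>
     (\<forall>k < length c. (c ! k, c ! ((k + 1) mod length c)) \<in> E)"

definition cycle_edges :: "nat list \<Rightarrow> (nat \<times> nat) set" where
  "cycle_edges c = {(c ! k, c ! ((k + 1) mod length c)) | k. k < length c}"

definition cycle_weight :: "(nat \<Rightarrow> nat \<Rightarrow> real) \<Rightarrow> nat list \<Rightarrow> real" where
  "cycle_weight A c = (\<Prod>k < length c. A (c ! k) (c ! ((k + 1) mod length c)))"

definition cycle_mean :: "(nat \<Rightarrow> nat \<Rightarrow> real) \<Rightarrow> nat list \<Rightarrow> real" where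
  "cycle_mean A c = root (length c) (cycle_weight A c)"

definition mcm :: "nat \<Rightarrow> (nat \<Rightarrow> nat \<Rightarrow> real) \<Rightarrow> real" where
  "mcm n A = Max (cycle_mean A ` {c. cycle_in (graph_edges n A) c})"

definition critical_cycle :: "nat \<Rightarrow> (nat \<Rightarrow> nat \<Rightarrow> real) \<Rightarrow> nat list \<Rightarrow> bool" where
  "critical_cycle n A c \<longleftrightarrow> cycle_in (graph_edges n A) c \<and> cycle_mean A c = mcm n A"

definition crit_nodes :: "nat \<Rightarrow> (nat \<Rightarrow> nat \<Rightarrow> real) \<Rightarrow> nat set" where
  "crit_nodes n A = (\<Union>c \<in> {c. critical_cycle n A c}. set c)"

definition crit_edges :: "nat \<Rightarrow> (nat \<Rightarrow> nat \<Rightarrow> real) \<Rightarrow> (nat \<times> nat) set" where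
  "crit_edges n A = (\<Union>c \<in> {c. critical_cycle n A c}. cycle_edges c)"

definition strongly_connected_on :: "(nat \<times> nat) set \<Rightarrow> nat set \<Rightarrow> bool" where
  "strongly_connected_on E S \<longleftrightarrow> S \<noteq> {} \<and>
     (\<forall>x \<in> S. \<forall>y \<in> S. (x, y) \<in> (E \<inter> S \<times> S)\<^sup>*)"

definition cyclicity :: "(nat \<times> nat) set \<Rightarrow> nat" where
  "cyclicity E = Gcd {length c | c. cycle_in E c}"

definition per :: "nat \<Rightarrow> (nat \<Rightarrow> nat \<Rightarrow> real) \<Rightarrow> nat" where
  "per n A = (LEAST \<sigma>. \<sigma> > 0 \<and> (\<exists>T. \<forall>t \<ge> T. \<forall>i \<in> {1..n}. \<forall>j \<in> {1..n}.
      mpow n (\<lambda>i j. A i j / mcm n A) (t + \<sigma>) i j = mpow n (\<lambda>i j. A i j / mcm n A) t i j))"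

end

theory Submission
  imports Defs "HOL-Library.FuncSet"
begin

text \<open>
  In a circulant the weight of an edge depends only on its offset \<open>y - x mod n\<close>, and
  repeatedly stepping by an offset \<open>t\<close> traces a cycle of mean \<open>a t\<close>. Hence \<open>\<lambda>(A)\<close> is the
  largest coefficient, every node is critical, and the critical edges are the steps by a
  maximal offset (\<open>0\<close> or an element of \<open>p\<close>). Critical steps preserve the residue class
  modulo \<open>m\<close>; inside a class the realisable offsets form a subgroup of the integers
  containing \<open>n\<close> and \<open>p\<close>, hence \<open>m\<close>, so each class is strongly connected, and translations
  map the classes onto each other.

  After dividing by \<open>\<lambda>(A)\<close> the entries lie in [0, 1] and the critical edges are those of
  weight 1. Large powers of such a matrix are periodic with period \<open>\<sigma>\<close> as soon as the
  diagonal entries of all large powers with exponent divisible by \<open>\<sigma>\<close> equal 1, and \<open>\<sigma>\<close>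
  is then the exact period if every closed critical walk has length divisible by \<open>\<sigma>\<close>.
  With a loop (\<open>a 0 = \<lambda>(A)\<close>) this gives \<open>\<sigma> = 1\<close>. Without loops every critical step is
  congruent to \<open>p ! 0\<close> modulo \<open>d = gcd (n, p ! 0 - p ! k)\<close>, so closed walks have lengths
  divisible by \<open>\<sigma> = d div gcd d (p ! 0)\<close>; conversely the subgroup generated by the excesses
  of step sequences over \<open>p ! 0\<close> contains \<open>d\<close>, which yields closed walks of lengths \<open>n\<close>
  and \<open>\<sigma> + n K\<close> through every node. The three gcd formulas are rewritings of \<open>\<sigma>\<close>.
\<close>

section \<open>Closed walks and cyclicity\<close>

definition closed_walk :: "(nat \<times> nat) set \<Rightarrow> nat list \<Rightarrow> bool" where
  "closed_walk E c \<longleftrightarrow> c \<noteq> [] \<and> (\<forall>k < length c. (c ! k, c ! ((k + 1) mod length c)) \<in> E)"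

lemma cycle_in_imp_closed_walk: "cycle_in E c \<Longrightarrow> closed_walk E c"
  unfolding cycle_in_def closed_walk_def by auto

lemma closed_walk_mono: "closed_walk E c \<Longrightarrow> E \<subseteq> E' \<Longrightarrow> closed_walk E' c"
  unfolding closed_walk_def by blast

lemma closed_walk_rotate:
  assumes "closed_walk E c"
  shows "closed_walk E (rotate i c)"
proof -
  let ?L = "length c"
  have L: "?L > 0" using assms unfolding closed_walk_def by simp
  have "(rotate i c ! k, rotate i c ! ((k + 1) mod ?L)) \<in> E" if k: "k < ?L" for k
proof -
    have e: "(c ! ((i + k) mod ?L), c ! (((i + k) mod ?L + 1) mod ?L)) \<in> E"
      using assms L unfolding closed_walk_def by simp
    have "((i + k) mod ?L + 1) mod ?L = (i + (k + 1) mod ?L) mod ?L"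
      by (simp add: mod_Suc_eq mod_add_right_eq)
    then show ?thesis using e k L by (simp add: nth_rotate)
  qed
  then show ?thesis using assms unfolding closed_walk_def by simp
qed

lemma closed_walk_split:
  assumes walk: "closed_walk E c" and j: "0 < j" "j < length c" and eq: "c ! 0 = c ! j"
  shows "closed_walk E (take j c)" "closed_walk E (drop j c)"
proof -
  let ?L = "length c"
  have edge: "\<And>k. k < ?L \<Longrightarrow> (c ! k, c ! ((k + 1) mod ?L)) \<in> E"
    using walk unfolding closed_walk_def by simp
  show "closed_walk E (take j c)"
    unfolding closed_walk_def
  proof (intro conjI allI impI)
    show "take j c \<noteq> []" using j by (cases c) auto
    fix k assume "k < length (take j c)"
    then have k: "k < j" using j by simp
    show "(take j c ! k, take j c ! ((k + 1) mod length (take j c))) \<in> E"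
    proof (cases "k + 1 < j")
      case True
      then show ?thesis using edge[of k] j k by simp
    next
      case False
      then have "k + 1 = j" using k by simp
      then show ?thesis using edge[of k] j k eq by simp
    qed
  qed
  show "closed_walk E (drop j c)"
    unfolding closed_walk_def
  proof (intro conjI allI impI)
    show "drop j c \<noteq> []" using j by simp
    fix k assume "k < length (drop j c)"
    then have k: "j + k < ?L" by simp
    show "(drop j c ! k, drop j c ! ((k + 1) mod length (drop j c))) \<in> E"
    proof (cases "j + k + 1 < ?L")
      case True
      then show ?thesis using edge[of "j + k"] j k by (simp add: add.commute add.left_commute)
    next
      case False
      then have last: "j + k + 1 = ?L" using k by simp
      then have "(k + 1) mod length (drop j c) = 0" by (metis length_drop diff_add_inverse mod_self add.assoc)
      moreover have "(j + k + 1) mod ?L = 0" using last by simp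
      ultimately show ?thesis using edge[of "j + k"] j k eq by simp
    qed
  qed
qed

text \<open>A closed walk that is not a cycle splits at a repeated node into two shorter closed walks.\<close>

lemma cycle_lengths_Gcd_dvd_closed_walk_length:
  "closed_walk E c \<Longrightarrow> Gcd {length c' | c'. cycle_in E c'} dvd length c"
proof (induction "length c" arbitrary: c rule: less_induct)
  case less
  let ?G = "Gcd {length c' | c'. cycle_in E c'}"
  show ?case
  proof (cases "distinct c")
    case True
    then have "cycle_in E c" using less.prems unfolding closed_walk_def cycle_in_def by simp
    then show ?thesis by (intro Gcd_dvd) auto
  next
    case False
    then obtain i j where ij: "i < j" "j < length c" "c ! i = c ! j"
      unfolding distinct_conv_nth by (metis linorder_neqE_nat)
    let ?c = "rotate i c"
    have "?c ! 0 = c ! i" "?c ! (j - i) = c ! j" using ij by (subst nth_rotate; auto)+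
    then have "?c ! 0 = ?c ! (j - i)" using ij by simp
    then have parts: "closed_walk E (take (j - i) ?c)" "closed_walk E (drop (j - i) ?c)"
      using closed_walk_split[OF closed_walk_rotate[OF less.prems], of "j - i"] ij by auto
    have "?G dvd j - i"
      using less.hyps[OF _ parts(1)] ij by simp
    moreover have "?G dvd length c - (j - i)"
      using less.hyps[OF _ parts(2)] ij by simp
    ultimately have "?G dvd (j - i) + (length c - (j - i))" by (rule dvd_add)
    then show ?thesis using ij by simp
  qed
qed

section \<open>Max-times powers of matrices with entries in [0, 1]\<close>

definition unit_edges :: "nat \<Rightarrow> (nat \<Rightarrow> nat \<Rightarrow> real) \<Rightarrow> (nat \<times> nat) set" where
  "unit_edges n B = {(i, j). i \<in> {1..n} \<and> j \<in> {1..n} \<and> B i j = 1}"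

definition mpow_period :: "nat \<Rightarrow> (nat \<Rightarrow> nat \<Rightarrow> real) \<Rightarrow> nat" where
  "mpow_period n B = (LEAST \<sigma>. \<sigma> > 0 \<and> (\<exists>T. \<forall>t \<ge> T. \<forall>i \<in> {1..n}. \<forall>j \<in> {1..n}.
      mpow n B (t + \<sigma>) i j = mpow n B t i j))"

definition normalized :: "nat \<Rightarrow> (nat \<Rightarrow> nat \<Rightarrow> real) \<Rightarrow> nat \<Rightarrow> nat \<Rightarrow> real" where
  "normalized n A i j = A i j / mcm n A"

lemma per_eq_mpow_period: "per n A = mpow_period n (normalized n A)"
  unfolding per_def mpow_period_def normalized_def ..

lemma eventually_const_if_finite_upper_values:
  fixes f :: "nat \<Rightarrow> real"
  assumes nonneg: "\<And>k. 0 \<le> f k"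
    and finite: "\<And>v. v > 0 \<Longrightarrow> finite (range f \<inter> {v..})"
    and mono: "\<And>k j. j \<ge> J \<Longrightarrow> f k \<le> f (k + j)"
  shows "\<exists>K. \<forall>k \<ge> K. f k = f K"
proof (cases "\<forall>k. f k = 0")
  case True
  then show ?thesis by auto
next
  case False
  then obtain k1 where k1: "f k1 > 0" using nonneg by (metis less_eq_real_def)
  define X where "X = f ` {k1 + J..}"
  have "X \<subseteq> range f \<inter> {f k1..}"
  proof
    fix x assume "x \<in> X"
    then obtain k where k: "k \<ge> k1 + J" "x = f k" unfolding X_def by auto
    have "f k1 \<le> f (k1 + (k - k1))" using k by (intro mono) auto
    then show "x \<in> range f \<inter> {f k1..}" using k by auto
  qed
  then have finX: "finite X" using finite[OF k1] finite_subset by blast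
  have "Max X \<in> X" using finX by (intro Max_in) (auto simp: X_def)
  then obtain k2 where k2: "k2 \<ge> k1 + J" "f k2 = Max X" unfolding X_def by auto
  have "f k = f k2" if "k \<ge> k2 + J" for k
proof -
    have "f k2 \<le> f (k2 + (k - k2))" using that by (intro mono) auto
    moreover have "f k \<in> X" unfolding X_def using that k2 by auto
    then have "f k \<le> Max X" using finX by simp
    ultimately show ?thesis using that k2 by simp
  qed
  then show ?thesis by (intro exI[of _ "k2 + J"]) auto
qed

locale unit_bounded_matrix =
  fixes n :: nat and B :: "nat \<Rightarrow> nat \<Rightarrow> real"
  assumes n_pos: "n \<ge> 1"
    and entry_nonneg: "\<And>i j. 0 \<le> B i j"
    and entry_le_one: "\<And>i j. B i j \<le> 1"
begin

lemma mpow_Suc_ge: "k \<in> {1..n} \<Longrightarrow> mpow n B t i k * B k j \<le> mpow n B (Suc t) i j"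
  unfolding mpow.simps by (rule Max_ge) auto

lemma mpow_Suc_attained:
  obtains k where "k \<in> {1..n}" "mpow n B (Suc t) i j = mpow n B t i k * B k j"
proof -
  have "Max ((\<lambda>k. mpow n B t i k * B k j) ` {1..n}) \<in> (\<lambda>k. mpow n B t i k * B k j) ` {1..n}"
    using n_pos by (intro Max_in) auto
  then show ?thesis using that by auto
qed

lemma mpow_nonneg: "0 \<le> mpow n B t i j"
proof (induction t arbitrary: j)
  case (Suc t)
  have "0 \<le> mpow n B t i 1 * B 1 j" using Suc entry_nonneg by simp
  also have "\<dots> \<le> mpow n B (Suc t) i j" using n_pos by (intro mpow_Suc_ge) auto
  finally show ?case .
qed simp

lemma mpow_le_one: "mpow n B t i j \<le> 1"
proof (induction t arbitrary: j)
  case (Suc t)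
  obtain k where "k \<in> {1..n}" "mpow n B (Suc t) i j = mpow n B t i k * B k j"
    by (rule mpow_Suc_attained)
  then show ?case
    using Suc entry_nonneg entry_le_one mpow_nonneg by (simp add: mult_le_one)
qed simp

lemma mpow_one: "i \<in> {1..n} \<Longrightarrow> mpow n B 1 i j = B i j"
  using entry_nonneg by (simp add: One_nat_def, intro Max_eqI) auto

lemma mpow_add_ge:
  assumes "k \<in> {1..n}"
  shows "mpow n B t i k * mpow n B l k j \<le> mpow n B (t + l) i j"
proof (induction l arbitrary: j)
  case 0
  then show ?case using mpow_nonneg by auto
next
  case (Suc l)
  obtain k' where k': "k' \<in> {1..n}" "mpow n B (Suc l) k j = mpow n B l k k' * B k' j"
    by (rule mpow_Suc_attained)
  have "mpow n B t i k * mpow n B (Suc l) k j = (mpow n B t i k * mpow n B l k k') * B k' j"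
    using k' by simp
  also have "\<dots> \<le> mpow n B (t + l) i k' * B k' j"
    using Suc.IH entry_nonneg by (intro mult_right_mono)
  also have "\<dots> \<le> mpow n B (Suc (t + l)) i j" using k'(1) by (rule mpow_Suc_ge)
  finally show ?case by simp
qed

lemma mpow_add_eq_one:
  assumes "k \<in> {1..n}" "mpow n B t i k = 1" "mpow n B l k j = 1"
  shows "mpow n B (t + l) i j = 1"
  using mpow_add_ge[OF assms(1), of t i l j] mpow_le_one[of "t + l" i j] assms by simp

lemma mpow_mult_eq_one:
  assumes "j \<in> {1..n}" "mpow n B l j j = 1"
  shows "mpow n B (c * l) j j = 1"
proof (induction c)
  case (Suc c)
  then show ?case using mpow_add_eq_one[OF assms(1) assms(2) Suc.IH] by simp
qed simp

lemma mpow_Suc_eq_one_E: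
  assumes "mpow n B (Suc t) i j = 1"
  obtains k where "k \<in> {1..n}" "mpow n B t i k = 1" "B k j = 1"
proof -
  obtain k where k: "k \<in> {1..n}" "mpow n B (Suc t) i j = mpow n B t i k * B k j"
    by (rule mpow_Suc_attained)
  have "mpow n B t i k * B k j \<le> mpow n B t i k" "mpow n B t i k * B k j \<le> B k j"
    using mpow_nonneg mpow_le_one entry_nonneg entry_le_one by (auto intro: mult_left_le mult_left_le_one_le)
  then show ?thesis
    using that k assms mpow_le_one[of t i k] entry_le_one[of k j] by auto
qed

lemma closed_walk_mpow_eq_one:
  assumes walk: "closed_walk (unit_edges n B) c"
  shows "mpow n B (length c) (c ! 0) (c ! 0) = 1"
proof -
  let ?L = "length c"
  have L: "?L > 0" using walk unfolding closed_walk_def by simp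
  have edge: "\<And>k. k < ?L \<Longrightarrow> c ! k \<in> {1..n} \<and> B (c ! k) (c ! ((k + 1) mod ?L)) = 1"
    using walk unfolding closed_walk_def unit_edges_def by auto
  have "l \<le> ?L \<Longrightarrow> mpow n B l (c ! 0) (c ! (l mod ?L)) = 1" for l
  proof (induction l)
    case (Suc l)
    then have l: "l < ?L" by simp
    have "1 = mpow n B l (c ! 0) (c ! l) * B (c ! l) (c ! (Suc l mod ?L))"
      using Suc l edge[OF l] by simp
    also have "\<dots> \<le> mpow n B (Suc l) (c ! 0) (c ! (Suc l mod ?L))"
      using edge[OF l] by (intro mpow_Suc_ge) auto
    finally show ?case
      using mpow_le_one[of "Suc l" "c ! 0" "c ! (Suc l mod ?L)"] by linarith
  qed simp
  from this[of ?L] show ?thesis by simp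
qed

text \<open>Every nonzero entry of a power is a monomial in the entries of B. Since the entries
  lie in [0, 1], only finitely many such monomials exceed a given positive bound; hence a
  sequence of entries that is eventually nondecreasing becomes constant.\<close>

definition entry_monomial :: "(nat \<times> nat \<Rightarrow> nat) \<Rightarrow> real" where
  "entry_monomial e = (\<Prod>q\<in>{1..n}\<times>{1..n}. B (fst q) (snd q) ^ e q)"

lemma entry_monomial_mult:
  assumes "k \<in> {1..n}" "j \<in> {1..n}"
  shows "entry_monomial e * B k j = entry_monomial (e((k, j) := Suc (e (k, j))))"
proof -
  have fin: "finite ({1..n}\<times>{1..n})" and mem: "(k, j) \<in> {1..n}\<times>{1..n}" using assms by auto
  define R where "R = (\<Prod>q\<in>{1..n}\<times>{1..n} - {(k, j)}. B (fst q) (snd q) ^ e q)"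
  have "entry_monomial (e((k, j) := Suc (e (k, j)))) = B k j ^ Suc (e (k, j)) * R"
    unfolding entry_monomial_def R_def
    by (subst prod.remove[OF fin mem]) (auto intro!: prod.cong)
  moreover have "entry_monomial e = B k j ^ e (k, j) * R"
    unfolding entry_monomial_def R_def by (subst prod.remove[OF fin mem]) simp
  ultimately show ?thesis by simp
qed

lemma mpow_zero_or_monomial:
  "j \<in> {1..n} \<Longrightarrow> mpow n B t i j = 0 \<or> (\<exists>e. mpow n B t i j = entry_monomial e)"
proof (induction t arbitrary: j)
  case 0
  then show ?case by (auto simp: entry_monomial_def intro!: exI[of _ "\<lambda>_. 0"])
next
  case (Suc t)
  obtain k where k: "k \<in> {1..n}" "mpow n B (Suc t) i j = mpow n B t i k * B k j"
    by (rule mpow_Suc_attained)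
  from Suc.IH[OF k(1)] show ?case
    using k entry_monomial_mult[OF k(1) Suc.prems] by auto
qed

lemma entry_monomial_le_factor:
  assumes "q \<in> {1..n}\<times>{1..n}"
  shows "entry_monomial e \<le> B (fst q) (snd q) ^ e q"
proof -
  have "entry_monomial e
      = B (fst q) (snd q) ^ e q * (\<Prod>q'\<in>{1..n}\<times>{1..n} - {q}. B (fst q') (snd q') ^ e q')"
    unfolding entry_monomial_def using prod.remove[OF _ assms] by simp
  also have "\<dots> \<le> B (fst q) (snd q) ^ e q * 1"
    using entry_nonneg entry_le_one
    by (intro mult_left_mono prod_le_1) (auto intro!: power_le_one)
  finally show ?thesis by simp
qed

lemma finite_entry_monomials_ge:
  assumes "v > 0"
  shows "finite (range entry_monomial \<inter> {v..})"
proof -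
  define D where "D = {1..n}\<times>{1..n}"
  define Q where "Q = (\<lambda>q. B (fst q) (snd q)) ` {q \<in> D. B (fst q) (snd q) < 1}"
  define \<beta> where "\<beta> = Max (insert 0 Q)"
  have finQ: "finite Q" unfolding Q_def D_def by simp
  have \<beta>: "0 \<le> \<beta>" "\<beta> < 1" unfolding \<beta>_def using finQ by (auto simp: Max_less_iff Q_def)
  obtain E where E: "\<beta> ^ E < v" using real_arch_pow_inv[OF assms \<beta>(2)] by blast
  have "range entry_monomial \<inter> {v..} \<subseteq> entry_monomial ` (Pi\<^sub>E D (\<lambda>_. {..E}))"
  proof
    fix x assume "x \<in> range entry_monomial \<inter> {v..}"
    then obtain e where x: "x = entry_monomial e" "v \<le> entry_monomial e" by auto
    have small: "B (fst q) (snd q) = 1 \<or> e q < E" if q: "q \<in> D" for q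
    proof (rule ccontr)
      assume "\<not> ?thesis"
      then have lt: "B (fst q) (snd q) < 1" and ge: "E \<le> e q"
        using entry_le_one[of "fst q" "snd q"] by (auto simp: less_le)
      have "B (fst q) (snd q) \<le> \<beta>" unfolding \<beta>_def using finQ lt q by (auto simp: Q_def)
      then have "B (fst q) (snd q) ^ e q \<le> \<beta> ^ e q" using entry_nonneg by (intro power_mono)
      also have "\<dots> \<le> \<beta> ^ E" using ge \<beta> by (intro power_decreasing) auto
      finally have "entry_monomial e < v"
        using entry_monomial_le_factor[of q e] q E unfolding D_def by linarith
      then show False using x by simp
    qed
    define e' where "e' = restrict (\<lambda>q. if B (fst q) (snd q) = 1 then 0 else e q) D"
    have "entry_monomial e' = entry_monomial e" unfolding entry_monomial_def D_def[symmetric]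
      by (rule prod.cong) (auto simp: e'_def)
    moreover have "e' \<in> Pi\<^sub>E D (\<lambda>_. {..E})" using small by (auto simp: e'_def) (meson less_imp_le)
    ultimately show "x \<in> entry_monomial ` (Pi\<^sub>E D (\<lambda>_. {..E}))" using x by (metis image_eqI)
  qed
  then show ?thesis
    by (rule finite_subset) (auto simp: D_def intro!: finite_PiE)
qed

lemma finite_mpow_values_ge:
  assumes "v > 0" "j \<in> {1..n}"
  shows "finite (range (\<lambda>k. mpow n B (g k) i j) \<inter> {v..})"
proof -
  have "range (\<lambda>k. mpow n B (g k) i j) \<inter> {v..} \<subseteq> range entry_monomial \<inter> {v..}"
  proof
    fix x assume "x \<in> range (\<lambda>k. mpow n B (g k) i j) \<inter> {v..}"
    then obtain k where "x = mpow n B (g k) i j" "v \<le> x" by auto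
    then show "x \<in> range entry_monomial \<inter> {v..}"
      using mpow_zero_or_monomial[OF assms(2), of "g k" i] assms(1) by auto
  qed
  then show ?thesis using finite_entry_monomials_ge[OF assms(1)] finite_subset by blast
qed

text \<open>Along each residue class modulo \<sigma> the entries are eventually nondecreasing, because
  the diagonal entries of large powers with exponent divisible by \<sigma> equal 1.\<close>

lemma mpow_progression_eventually_const:
  assumes \<sigma>: "\<sigma> > 0" and j: "j \<in> {1..n}"
    and diag: "\<forall>l \<ge> J. \<sigma> dvd l \<longrightarrow> mpow n B l j j = 1"
  shows "\<exists>K. \<forall>k \<ge> K. mpow n B (\<rho> + \<sigma> * k) i j = mpow n B (\<rho> + \<sigma> * K) i j"
proof (rule eventually_const_if_finite_upper_values[where J = J])
  fix k l :: nat assume "J \<le> l"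
  moreover have "l \<le> \<sigma> * l" using \<sigma> by simp
  ultimately have "mpow n B (\<sigma> * l) j j = 1" using diag by (meson dvd_triv_left le_trans)
  then have "mpow n B (\<rho> + \<sigma> * k) i j \<le> mpow n B (\<rho> + \<sigma> * k + \<sigma> * l) i j"
    using mpow_add_ge[OF j, of "\<rho> + \<sigma> * k" i "\<sigma> * l" j] by simp
  then show "mpow n B (\<rho> + \<sigma> * k) i j \<le> mpow n B (\<rho> + \<sigma> * (k + l)) i j"
    by (simp add: algebra_simps)
next
  fix k show "0 \<le> mpow n B (\<rho> + \<sigma> * k) i j" by (rule mpow_nonneg)
next
  fix v :: real assume "v > 0"
  then show "finite (range (\<lambda>k. mpow n B (\<rho> + \<sigma> * k) i j) \<inter> {v..})"
    by (rule finite_mpow_values_ge[OF _ j])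
qed

lemma mpow_eventually_periodic:
  assumes \<sigma>: "\<sigma> > 0"
    and diag: "\<And>j. j \<in> {1..n} \<Longrightarrow> \<exists>J. \<forall>l \<ge> J. \<sigma> dvd l \<longrightarrow> mpow n B l j j = 1"
  shows "\<exists>T. \<forall>t \<ge> T. \<forall>i \<in> {1..n}. \<forall>j \<in> {1..n}. mpow n B (t + \<sigma>) i j = mpow n B t i j"
proof -
  have stable: "\<exists>K. \<forall>k \<ge> K. mpow n B (\<rho> + \<sigma> * k) i j = mpow n B (\<rho> + \<sigma> * K) i j"
    if j: "j \<in> {1..n}" for \<rho> i j
    using diag[OF j] mpow_progression_eventually_const[OF \<sigma> j] by blast
  define K where "K \<rho> i j =
    (SOME K. \<forall>k \<ge> K. mpow n B (\<rho> + \<sigma> * k) i j = mpow n B (\<rho> + \<sigma> * K) i j)" for \<rho> i j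
  have K: "mpow n B (\<rho> + \<sigma> * k) i j = mpow n B (\<rho> + \<sigma> * K \<rho> i j) i j"
    if "j \<in> {1..n}" "k \<ge> K \<rho> i j" for \<rho> i j k
    using someI_ex[OF stable[OF that(1)]] that(2) unfolding K_def by blast
  define X where "X = {..<\<sigma>} \<times> {1..n} \<times> {1..n}"
  define K0 where "K0 = Max ((\<lambda>(\<rho>, i, j). K \<rho> i j) ` X)"
  have finX: "finite X" unfolding X_def by simp
  show ?thesis
  proof (intro exI[of _ "\<sigma> * K0"] allI impI ballI)
    fix t i j assume t: "\<sigma> * K0 \<le> t" and ij: "i \<in> {1..n}" "j \<in> {1..n}"
    define \<rho> where "\<rho> = t mod \<sigma>"
    define k where "k = t div \<sigma>"
    have tk: "t = \<rho> + \<sigma> * k" "t + \<sigma> = \<rho> + \<sigma> * (k + 1)" unfolding \<rho>_def k_def by simp_all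
    have "\<sigma> * K0 div \<sigma> \<le> t div \<sigma>" by (rule div_le_mono[OF t])
    then have "K0 \<le> k" unfolding k_def using \<sigma> by simp
    moreover have "(\<rho>, i, j) \<in> X" unfolding X_def \<rho>_def using ij \<sigma> by auto
    then have "K \<rho> i j \<le> K0" unfolding K0_def using finX by (metis (no_types, lifting) Max_ge case_prod_conv finite_imageI image_eqI)
    ultimately have "K \<rho> i j \<le> k" "K \<rho> i j \<le> k + 1" by linarith+
    then have "mpow n B (\<rho> + \<sigma> * (k + 1)) i j = mpow n B (\<rho> + \<sigma> * k) i j"
      using K[OF ij(2)] by metis
    then show "mpow n B (t + \<sigma>) i j = mpow n B t i j" by (metis tk)
  qed
qed

lemma mpow_period_eqI:
  assumes \<sigma>: "\<sigma> > 0"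
    and diag: "\<And>j. j \<in> {1..n} \<Longrightarrow> \<exists>J. \<forall>l \<ge> J. \<sigma> dvd l \<longrightarrow> mpow n B l j j = 1"
    and return: "\<And>t. mpow n B t 1 1 = 1 \<Longrightarrow> \<sigma> dvd t"
  shows "mpow_period n B = \<sigma>"
  unfolding mpow_period_def
proof (rule Least_equality)
  show "\<sigma> > 0 \<and> (\<exists>T. \<forall>t\<ge>T. \<forall>i\<in>{1..n}. \<forall>j\<in>{1..n}. mpow n B (t + \<sigma>) i j = mpow n B t i j)"
    using \<sigma> mpow_eventually_periodic[OF \<sigma> diag] by blast
next
  fix s assume s: "s > 0 \<and> (\<exists>T. \<forall>t\<ge>T. \<forall>i\<in>{1..n}. \<forall>j\<in>{1..n}. mpow n B (t + s) i j = mpow n B t i j)"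
  then obtain T where T: "\<forall>t\<ge>T. \<forall>i\<in>{1..n}. \<forall>j\<in>{1..n}. mpow n B (t + s) i j = mpow n B t i j"
    by blast
  have one: "1 \<in> {1..n}" using n_pos by simp
  obtain J where J: "\<forall>l\<ge>J. \<sigma> dvd l \<longrightarrow> mpow n B l 1 1 = 1" using diag[OF one] by blast
  define t where "t = \<sigma> * (T + J)"
  have "T + J \<le> t" unfolding t_def using \<sigma> by simp
  moreover have "\<sigma> dvd t" unfolding t_def by simp
  ultimately have "mpow n B t 1 1 = 1" using J by auto
  then have "mpow n B (t + s) 1 1 = 1" using T one \<open>T + J \<le> t\<close> by auto
  then have "\<sigma> dvd t + s" by (rule return)
  then have "\<sigma> dvd s" unfolding t_def by (simp add: dvd_add_right_iff)
  then show "\<sigma> \<le> s" using s by (simp add: dvd_imp_le)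
qed

end

lemma int_subgroup_mult_closed:
  fixes Z :: "int set"
  assumes zero: "0 \<in> Z" and add: "\<And>x y. x \<in> Z \<Longrightarrow> y \<in> Z \<Longrightarrow> x + y \<in> Z"
    and neg: "\<And>x. x \<in> Z \<Longrightarrow> - x \<in> Z" and x: "x \<in> Z"
  shows "u * x \<in> Z"
proof -
  have nat: "int k * x \<in> Z" for k
    by (induction k) (auto simp: zero add x distrib_right)
  show ?thesis
  proof (cases "u \<ge> 0")
    case True
    then show ?thesis using nat[of "nat u"] by simp
  next
    case False
    then show ?thesis using neg[OF nat[of "nat (- u)"]] by simp
  qed
qed

text \<open>Closure under negation comes from \<open>- x = (n - 1) x + n (- x)\<close>.\<close>

lemma int_submonoid_neg_closed:
  fixes Z :: "int set"
  assumes zero: "0 \<in> Z" and add: "\<And>x y. x \<in> Z \<Longrightarrow> y \<in> Z \<Longrightarrow> x + y \<in> Z"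
    and multiples: "\<And>k. int n * k \<in> Z" and "n \<ge> 1" and x: "x \<in> Z"
  shows "- x \<in> Z"
proof -
  have nat_multiple: "int k * x \<in> Z" for k
  proof (induction k)
    case (Suc k)
    have "x + int k * x \<in> Z" using add[OF x Suc.IH] .
    then show ?case by (simp add: algebra_simps)
  qed (simp add: zero)
  have "int (n - 1) * x + int n * (- x) \<in> Z" using add nat_multiple multiples by blast
  moreover have "int (n - 1) * x + int n * (- x) = - x" using \<open>n \<ge> 1\<close> by (simp add: of_nat_diff algebra_simps)
  ultimately show ?thesis by simp
qed

lemma int_subgroup_Gcd_mem:
  fixes Z :: "int set"
  assumes zero: "0 \<in> Z" and add: "\<And>x y. x \<in> Z \<Longrightarrow> y \<in> Z \<Longrightarrow> x + y \<in> Z"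
    and neg: "\<And>x. x \<in> Z \<Longrightarrow> - x \<in> Z" and "finite A"
    and gen: "\<And>a. a \<in> A \<Longrightarrow> int a \<in> Z"
  shows "int (Gcd A) \<in> Z"
  using \<open>finite A\<close> gen
proof (induction A rule: finite_induct)
  case empty
  then show ?case using zero by simp
next
  case (insert a A)
  obtain u v where "u * int a + v * int (Gcd A) = gcd (int a) (int (Gcd A))"
    using bezout_int by blast
  moreover have "u * int a + v * int (Gcd A) \<in> Z"
    using insert by (intro add int_subgroup_mult_closed[OF zero add neg]) auto
  ultimately show ?case by (simp add: gcd_int_int_eq)
qed

lemma div_gcd_dvd_iff:
  fixes M x t :: nat
  assumes "0 < M"
  shows "M div gcd M x dvd t \<longleftrightarrow> M dvd t * x"
proof -
  define g where "g = gcd M x"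
  have g: "g > 0" using assms unfolding g_def by simp
  obtain M' where M': "M = g * M'" unfolding g_def by (metis gcd_dvd1 dvdE)
  obtain x' where x': "x = g * x'" unfolding g_def by (metis gcd_dvd2 dvdE)
  have "M div g = M'" "x div g = x'" using M' x' g by simp_all
  then have "coprime M' x'"
    using div_gcd_coprime[of M x] assms unfolding g_def by simp
  moreover have "M dvd t * x \<longleftrightarrow> M' dvd t * x'"
    using M' x' g by (simp add: mult.left_commute)
  ultimately show ?thesis
    using M' g unfolding g_def[symmetric] by (simp add: coprime_dvd_mult_left_iff)
qed

lemma dvd_sum_list: "(\<And>x. x \<in> set xs \<Longrightarrow> d dvd x) \<Longrightarrow> (d :: 'a :: comm_semiring_1) dvd sum_list xs"
  by (induction xs) auto

lemma dvd_mult_div_gcd: "(n::nat) dvd (n div gcd n t) * t"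
proof -
  have "(n div gcd n t) * t = n * (t div gcd n t)"
    using div_mult_swap[of "gcd n t" n t] div_mult_swap[of "gcd n t" t n] by (simp add: mult.commute)
  then show ?thesis by simp
qed

lemma div_mult_swap_dvd:
  fixes X A B :: nat
  assumes "X dvd A" "X dvd B"
  shows "A div X * B = A * (B div X)"
proof -
  have "A div X * B = B * A div X" using div_mult_swap[OF assms(1), of B] by (simp add: mult.commute)
  also have "\<dots> = A * (B div X)" using div_mult_swap[OF assms(2), of A] by (simp add: mult.commute)
  finally show ?thesis .
qed

lemma dvd_div_mult_if_dvd:
  fixes b c d x :: nat
  assumes "d dvd b" "x dvd b" "x dvd c"
  shows "d dvd b div x * c"
  using assms div_mult_swap_dvd[OF assms(2,3)] by simp

lemma Gcd_insert_take_dvd_nth: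
  fixes xs :: "nat list"
  assumes "j \<le> k" "k < length xs"
  shows "Gcd (insert n (set (take (k + 1) xs))) dvd xs ! j"
proof (rule Gcd_dvd)
  have "take (k + 1) xs ! j \<in> set (take (k + 1) xs)" using assms by (intro nth_mem) simp
  then show "xs ! j \<in> insert n (set (take (k + 1) xs))" using assms by simp
qed

lemma dvd_hd_diff_if_dvd_consecutive_diffs:
  fixes xs :: "nat list"
  assumes sorted: "sorted_wrt (>) xs"
    and consecutive: "\<And>j. 1 \<le> j \<Longrightarrow> j < length xs \<Longrightarrow> d dvd xs ! (j - 1) - xs ! j"
    and "k < length xs"
  shows "d dvd xs ! 0 - xs ! k"
  using \<open>k < length xs\<close>
proof (induction k)
  case (Suc k)
  have "xs ! Suc k < xs ! k" using sorted_wrt_nth_less[OF sorted, of k "Suc k"] Suc.prems by simp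
  moreover have "xs ! k \<le> xs ! 0"
    using sorted_wrt_nth_less[OF sorted, of 0 k] Suc.prems by (cases k) auto
  ultimately have "xs ! 0 - xs ! Suc k = (xs ! 0 - xs ! k) + (xs ! k - xs ! Suc k)" by simp
  then show ?case using Suc consecutive[of "Suc k"] by simp
qed simp

lemma mult_dvd_if_dvd_div:
  fixes b c d x :: nat
  assumes "c dvd b div x" "d dvd x" "x dvd b"
  shows "c * d dvd b"
  using mult_dvd_mono[OF assms(1,2)] assms(3) by simp

section \<open>The circulant digraph\<close>

definition node :: "nat \<Rightarrow> nat \<Rightarrow> nat" where
  "node n u = u mod n + 1"

definition node_int :: "nat \<Rightarrow> int \<Rightarrow> nat" where
  "node_int n z = nat (z mod int n) + 1"

definition step_cycle :: "nat \<Rightarrow> nat \<Rightarrow> nat \<Rightarrow> nat list" where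
  "step_cycle n u t = map (\<lambda>l. node n (u + l * t)) [0..<n div gcd n t]"

lemma node_in_range: "n \<ge> 1 \<Longrightarrow> node n u \<in> {1..n}"
  unfolding node_def by (simp add: Suc_leI)

lemma node_pred: "x \<in> {1..n} \<Longrightarrow> node n (x - 1) = x"
  unfolding node_def by auto

lemma node_add_mult: "node n (u + n * w) = node n u"
  unfolding node_def by simp

lemma circ_node:
  assumes "n \<ge> 1"
  shows "circ n a (node n u) (node n (u + t)) = a (t mod n)"
proof -
  define r where "r = u mod n"
  have r: "r < n" unfolding r_def using assms by simp
  have "((u + t) mod n + 1 + n - (u mod n + 1)) mod n = ((r + t) mod n + (n - r)) mod n"
    unfolding r_def using r r_def by (simp add: mod_add_left_eq)
  also have "\<dots> = (r + t + (n - r)) mod n" by (simp add: mod_add_left_eq)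
  also have "\<dots> = (t + n) mod n" using r by simp
  also have "\<dots> = t mod n" by simp
  finally show ?thesis unfolding circ_def node_def by simp
qed

lemma node_offset:
  assumes "x \<in> {1..n}" "y \<in> {1..n}"
  shows "node n (x - 1 + (y + n - x) mod n) = y"
proof -
  have "(x - 1 + (y + n - x) mod n) mod n = (x - 1 + (y + n - x)) mod n"
    by (simp add: mod_add_right_eq)
  also have "x - 1 + (y + n - x) = (y - 1) + n" using assms by auto
  also have "((y - 1) + n) mod n = y - 1"
    using assms by (simp only: mod_add_self2) (auto intro!: mod_less)
  finally show ?thesis unfolding node_def using assms by auto
qed

lemma node_int_of_nat: "node_int n (int u) = node n u"
  unfolding node_int_def node_def by (simp add: zmod_int[symmetric])

lemma node_int_pred: "x \<in> {1..n} \<Longrightarrow> node_int n (int x - 1) = x"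
  using node_int_of_nat[of n "x - 1"] node_pred[of x n] by (simp add: of_nat_diff)

lemma node_int_add_mult: "node_int n (z + int n * k) = node_int n z"
  unfolding node_int_def by simp

lemma node_int_in_range: "n \<ge> 1 \<Longrightarrow> node_int n z \<in> {1..n}"
proof -
  assume "n \<ge> 1"
  then have "z mod int n < int n" "0 \<le> z mod int n" by auto
  then show ?thesis unfolding node_int_def by auto
qed

lemma node_int_cong: "n \<ge> 1 \<Longrightarrow> int (node_int n z) - 1 = z mod int n"
  unfolding node_int_def by simp

lemma node_int_dvd: "n \<ge> 1 \<Longrightarrow> int n dvd z - (int (node_int n z) - 1)"
  by (simp add: node_int_cong mod_eq_dvd_iff[symmetric])

lemma node_step_period: "node n (u + (l mod (n div gcd n t)) * t) = node n (u + l * t)"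
proof -
  define q where "q = n div gcd n t"
  obtain w where w: "q * t = n * w" using dvd_mult_div_gcd[of n t] unfolding q_def by (metis dvdE)
  have "l * t = (l mod q + q * (l div q)) * t" by simp
  also have "\<dots> = (l mod q) * t + (q * t) * (l div q)"
    by (simp only: distrib_right distrib_left ac_simps)
  also have "\<dots> = (l mod q) * t + n * (w * (l div q))" unfolding w by (simp add: mult.assoc)
  finally show ?thesis unfolding q_def[symmetric] by (metis add.assoc node_add_mult)
qed

lemma div_gcd_pos: "(n::nat) \<ge> 1 \<Longrightarrow> 0 < n div gcd n t"
  using gcd_le1_nat[of n t] by (simp add: div_greater_zero_iff)

lemma node_step_inj:
  assumes "n \<ge> 1" and l: "l' \<le> l" "l < n div gcd n t"
    and eq: "node n (u + l * t) = node n (u + l' * t)"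
  shows "l = l'"
proof -
  have "(u + l * t) mod n = (u + l' * t) mod n" using eq unfolding node_def by simp
  then have "n dvd (u + l * t) - (u + l' * t)"
    using l by (subst mod_eq_dvd_iff_nat[symmetric]) (auto intro: mult_le_mono1)
  then have "n dvd (l - l') * t" by (simp add: diff_mult_distrib)
  then have "n div gcd n t dvd l - l'" using div_gcd_dvd_iff[of n t "l - l'"] assms(1) by simp
  moreover have "l - l' < n div gcd n t" using l by linarith
  ultimately have "l - l' = 0" by (metis dvd_imp_le not_le neq0_conv)
  then show ?thesis using l by simp
qed

lemma length_step_cycle: "length (step_cycle n u t) = n div gcd n t"
  unfolding step_cycle_def by simp

lemma
  assumes "n \<ge> 1"
  shows step_cycle_nonempty: "step_cycle n u t \<noteq> []"
    and step_cycle_distinct: "distinct (step_cycle n u t)"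
    and step_cycle_nth: "l < length (step_cycle n u t) \<Longrightarrow> step_cycle n u t ! l = node n (u + l * t)"
    and step_cycle_nth_next: "l < length (step_cycle n u t) \<Longrightarrow>
        step_cycle n u t ! ((l + 1) mod length (step_cycle n u t)) = node n (u + l * t + t)"
proof -
  let ?q = "n div gcd n t"
  show "step_cycle n u t \<noteq> []"
    using div_gcd_pos[OF assms, of t] by (simp flip: length_greater_0_conv add: length_step_cycle)
  show nth: "\<And>l. l < length (step_cycle n u t) \<Longrightarrow> step_cycle n u t ! l = node n (u + l * t)"
    unfolding step_cycle_def by simp
  show "distinct (step_cycle n u t)"
    unfolding step_cycle_def distinct_map
  proof
    show "inj_on (\<lambda>l. node n (u + l * t)) (set [0..<?q])"
      by (rule inj_onI) (metis atLeastLessThan_iff le_cases set_upt node_step_inj[OF assms])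
  qed simp
  assume "l < length (step_cycle n u t)"
  then have "step_cycle n u t ! ((l + 1) mod length (step_cycle n u t)) = node n (u + ((l + 1) mod ?q) * t)"
    using nth div_gcd_pos[OF assms, of t] length_step_cycle by simp
  also have "\<dots> = node n (u + (l + 1) * t)" by (rule node_step_period)
  finally show "step_cycle n u t ! ((l + 1) mod length (step_cycle n u t)) = node n (u + l * t + t)"
    by (simp add: algebra_simps)
qed

definition step_walk :: "nat \<Rightarrow> nat \<Rightarrow> nat list \<Rightarrow> nat list" where
  "step_walk n u ss = map (\<lambda>k. node n (u + sum_list (take k ss))) [0..<length ss]"

lemma length_step_walk [simp]: "length (step_walk n u ss) = length ss"
  unfolding step_walk_def by simp

lemma prod_eq_power_bound_imp_eq:
  fixes f :: "'a \<Rightarrow> real"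
  assumes "finite I" and bounds: "\<And>i. i \<in> I \<Longrightarrow> 0 \<le> f i \<and> f i \<le> L" and "L > 0"
    and prod: "prod f I = L ^ card I" and i: "i \<in> I"
  shows "f i = L"
proof (rule ccontr)
  assume "f i \<noteq> L"
  then have lt: "f i < L" using bounds[OF i] by simp
  have "prod f I = f i * prod f (I - {i})" using prod.remove[OF \<open>finite I\<close> i] by simp
  also have "\<dots> \<le> f i * L ^ card (I - {i})"
    using bounds prod_mono[of "I - {i}" f "\<lambda>_. L"] bounds[OF i]
    by (intro mult_left_mono) (auto simp: prod_constant)
  also have "\<dots> < L * L ^ card (I - {i})" using lt \<open>L > 0\<close> by (intro mult_strict_right_mono) auto
  also have "\<dots> = L ^ card I"
    using \<open>finite I\<close> i card_gt_0_iff[of I] by (cases "card I") auto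
  finally show False using prod by simp
qed

definition max_coeff :: "nat \<Rightarrow> (nat \<Rightarrow> real) \<Rightarrow> real" where
  "max_coeff n a = Max (a ` {..<n})"

locale circulant =
  fixes n :: nat and a :: "nat \<Rightarrow> real"
  assumes n_pos: "n \<ge> 1"
    and nonneg: "\<forall>t < n. a t \<ge> 0"
    and nonzero: "\<exists>t < n. a t \<noteq> 0"
begin

lemma coeff_le_max_coeff: "t < n \<Longrightarrow> a t \<le> max_coeff n a"
  unfolding max_coeff_def by (rule Max_ge) auto

lemma max_coeff_attained:
  obtains t where "t < n" "a t = max_coeff n a"
proof -
  have "a 0 \<in> a ` {..<n}" using n_pos by simp
  then have "max_coeff n a \<in> a ` {..<n}" unfolding max_coeff_def by (intro Max_in) auto
  then show ?thesis using that by auto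
qed

lemma max_coeff_pos: "0 < max_coeff n a"
proof -
  obtain t where t: "t < n" "a t \<noteq> 0" using nonzero by blast
  then have "0 < a t" using nonneg by (simp add: less_le)
  then show ?thesis using coeff_le_max_coeff[OF t(1)] by simp
qed

lemma circ_bounds: "0 \<le> circ n a x y \<and> circ n a x y \<le> max_coeff n a"
proof -
  have "(y + n - x) mod n < n" using n_pos by simp
  then show ?thesis unfolding circ_def using nonneg coeff_le_max_coeff by auto
qed

lemma step_cycle_edge:
  assumes "t < n" "k < length (step_cycle n u t)"
  shows "circ n a (step_cycle n u t ! k) (step_cycle n u t ! ((k + 1) mod length (step_cycle n u t))) = a t"
  using assms step_cycle_nth[OF n_pos] step_cycle_nth_next[OF n_pos] circ_node[OF n_pos] by simp

lemma step_cycle_in_graph: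
  assumes "t < n" "a t \<noteq> 0"
  shows "cycle_in (graph_edges n (circ n a)) (step_cycle n u t)"
  unfolding cycle_in_def graph_edges_def
proof (intro conjI allI impI)
  show "step_cycle n u t \<noteq> []" "distinct (step_cycle n u t)"
    using step_cycle_nonempty[OF n_pos] step_cycle_distinct[OF n_pos] by auto
  fix k assume k: "k < length (step_cycle n u t)"
  show "(step_cycle n u t ! k, step_cycle n u t ! ((k + 1) mod length (step_cycle n u t)))
         \<in> {(i, j). i \<in> {1..n} \<and> j \<in> {1..n} \<and> circ n a i j \<noteq> 0}"
    using step_cycle_nth[OF n_pos k] step_cycle_nth_next[OF n_pos k] step_cycle_edge[OF assms(1) k]
      assms(2) node_in_range[OF n_pos] by simp
qed

lemma cycle_mean_step_cycle:
  assumes "t < n"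
  shows "cycle_mean (circ n a) (step_cycle n u t) = a t"
proof -
  let ?c = "step_cycle n u t"
  have "cycle_weight (circ n a) ?c = a t ^ length ?c"
    unfolding cycle_weight_def using step_cycle_edge[OF assms] by simp
  then show ?thesis
    unfolding cycle_mean_def using step_cycle_nonempty[OF n_pos] nonneg assms
    by (simp add: real_root_pos2)
qed

lemma cycle_nodes_in_range: "cycle_in (graph_edges n (circ n a)) c \<Longrightarrow> set c \<subseteq> {1..n}"
  unfolding cycle_in_def graph_edges_def by (auto simp: in_set_conv_nth)

lemma finite_cycles: "finite {c. cycle_in (graph_edges n (circ n a)) c}"
proof (rule finite_subset)
  show "{c. cycle_in (graph_edges n (circ n a)) c} \<subseteq> {xs. set xs \<subseteq> {1..n} \<and> length xs \<le> n}"
  proof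
    fix c assume "c \<in> {c. cycle_in (graph_edges n (circ n a)) c}"
    then have c: "cycle_in (graph_edges n (circ n a)) c" by simp
    have "length c = card (set c)" using c unfolding cycle_in_def by (simp add: distinct_card)
    also have "\<dots> \<le> card {1..n}" using cycle_nodes_in_range[OF c] by (intro card_mono) auto
    finally show "c \<in> {xs. set xs \<subseteq> {1..n} \<and> length xs \<le> n}"
      using cycle_nodes_in_range[OF c] by simp
  qed
qed (rule finite_lists_length_le, simp)

lemma cycle_mean_le_max_coeff:
  assumes "c \<noteq> []"
  shows "cycle_mean (circ n a) c \<le> max_coeff n a"
proof -
  have "cycle_weight (circ n a) c \<le> (\<Prod>k<length c. max_coeff n a)"
    unfolding cycle_weight_def using circ_bounds by (intro prod_mono) auto
  then have "cycle_weight (circ n a) c \<le> max_coeff n a ^ length c" by simp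
  then have "cycle_mean (circ n a) c \<le> root (length c) (max_coeff n a ^ length c)"
    unfolding cycle_mean_def using assms by (intro real_root_le_mono) auto
  also have "\<dots> = max_coeff n a" using assms max_coeff_pos by (simp add: real_root_pos2)
  finally show ?thesis .
qed

lemma mcm_circ: "mcm n (circ n a) = max_coeff n a"
  unfolding mcm_def
proof (rule Max_eqI)
  show "finite (cycle_mean (circ n a) ` {c. cycle_in (graph_edges n (circ n a)) c})"
    using finite_cycles by simp
next
  fix y assume "y \<in> cycle_mean (circ n a) ` {c. cycle_in (graph_edges n (circ n a)) c}"
  then show "y \<le> max_coeff n a" using cycle_mean_le_max_coeff unfolding cycle_in_def by auto
next
  obtain t where t: "t < n" "a t = max_coeff n a" by (rule max_coeff_attained)
  then have "cycle_in (graph_edges n (circ n a)) (step_cycle n 0 t)"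
    using step_cycle_in_graph max_coeff_pos by simp
  moreover have "cycle_mean (circ n a) (step_cycle n 0 t) = max_coeff n a"
    using cycle_mean_step_cycle t by simp
  ultimately show "max_coeff n a \<in> cycle_mean (circ n a) ` {c. cycle_in (graph_edges n (circ n a)) c}"
    by (metis (mono_tags, lifting) image_eqI mem_Collect_eq)
qed

lemma critical_step_cycle:
  assumes "t < n" "a t = max_coeff n a"
  shows "critical_cycle n (circ n a) (step_cycle n u t)"
  unfolding critical_cycle_def mcm_circ
  using step_cycle_in_graph[OF assms(1)] cycle_mean_step_cycle[OF assms(1)] assms(2) max_coeff_pos
  by simp

lemma critical_cycle_edge:
  assumes c: "critical_cycle n (circ n a) c" and k: "k < length c"
  shows "circ n a (c ! k) (c ! ((k + 1) mod length c)) = max_coeff n a"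
proof -
  have "c \<noteq> []" and mean: "cycle_mean (circ n a) c = max_coeff n a"
    using c mcm_circ unfolding critical_cycle_def cycle_in_def by auto
  moreover have "0 \<le> cycle_weight (circ n a) c"
    unfolding cycle_weight_def using circ_bounds by (intro prod_nonneg) auto
  ultimately have "cycle_weight (circ n a) c = root (length c) (cycle_weight (circ n a) c) ^ length c"
    by (simp add: real_root_pow_pos2)
  then have "(\<Prod>k<length c. circ n a (c ! k) (c ! ((k + 1) mod length c)))
      = max_coeff n a ^ card {..<length c}"
    using mean unfolding cycle_mean_def cycle_weight_def by simp
  from prod_eq_power_bound_imp_eq[OF _ _ max_coeff_pos this] show ?thesis
    using circ_bounds k by auto
qed

lemma crit_edges_circ:
  "crit_edges n (circ n a) = {(x, y). x \<in> {1..n} \<and> y \<in> {1..n} \<and> circ n a x y = max_coeff n a}"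
proof safe
  fix x y assume "(x, y) \<in> crit_edges n (circ n a)"
  then obtain c k where c: "critical_cycle n (circ n a) c" and k: "k < length c"
    and xy: "(x, y) = (c ! k, c ! ((k + 1) mod length c))"
    unfolding crit_edges_def cycle_edges_def by auto
  then have "(x, y) \<in> graph_edges n (circ n a)"
    unfolding critical_cycle_def cycle_in_def by auto
  then show "x \<in> {1..n}" "y \<in> {1..n}" unfolding graph_edges_def by auto
  show "circ n a x y = max_coeff n a" using critical_cycle_edge[OF c k] xy by simp
next
  fix x y assume x: "x \<in> {1..n}" and y: "y \<in> {1..n}" and xy: "circ n a x y = max_coeff n a"
  define t where "t = (y + n - x) mod n"
  have "t < n" unfolding t_def using n_pos by simp
  moreover have "a t = max_coeff n a" using xy unfolding circ_def t_def by simp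
  ultimately have crit: "critical_cycle n (circ n a) (step_cycle n (x - 1) t)"
    by (rule critical_step_cycle)
  let ?c = "step_cycle n (x - 1) t"
  have l0: "0 < length ?c" using step_cycle_nonempty[OF n_pos] by auto
  have "?c ! 0 = x" "?c ! ((0 + 1) mod length ?c) = y"
    using step_cycle_nth[OF n_pos l0] step_cycle_nth_next[OF n_pos l0] node_pred[OF x]
      node_offset[OF x y] unfolding t_def by simp_all
  then have "(x, y) \<in> cycle_edges ?c" unfolding cycle_edges_def using l0 by force
  then show "(x, y) \<in> crit_edges n (circ n a)" unfolding crit_edges_def using crit by auto
qed

lemma crit_nodes_circ: "crit_nodes n (circ n a) = {1..n}"
proof
  show "crit_nodes n (circ n a) \<subseteq> {1..n}"
    unfolding crit_nodes_def critical_cycle_def using cycle_nodes_in_range by auto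
next
  show "{1..n} \<subseteq> crit_nodes n (circ n a)"
  proof
    fix x assume x: "x \<in> {1..n}"
    obtain t where "t < n" "a t = max_coeff n a" by (rule max_coeff_attained)
    then have crit: "critical_cycle n (circ n a) (step_cycle n (x - 1) t)"
      by (rule critical_step_cycle)
    have "step_cycle n (x - 1) t ! 0 = x"
      using step_cycle_nth[OF n_pos] step_cycle_nonempty[OF n_pos] node_pred[OF x] by simp
    then have "x \<in> set (step_cycle n (x - 1) t)"
      using step_cycle_nonempty[OF n_pos] by (metis length_greater_0_conv nth_mem)
    then show "x \<in> crit_nodes n (circ n a)" unfolding crit_nodes_def using crit by auto
  qed
qed

sublocale normalized: unit_bounded_matrix n "normalized n (circ n a)"
  by unfold_locales
    (use n_pos circ_bounds max_coeff_pos in \<open>auto simp: normalized_def mcm_circ divide_le_eq_1\<close>)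

lemma crit_edges_eq_unit_edges: "crit_edges n (circ n a) = unit_edges n (normalized n (circ n a))"
  unfolding crit_edges_circ unit_edges_def normalized_def mcm_circ using max_coeff_pos by auto

end

section \<open>The components of the critical digraph\<close>

definition residue_class :: "nat \<Rightarrow> nat \<Rightarrow> nat \<Rightarrow> nat set" where
  "residue_class n m i = (\<lambda>k. i + k * m) ` {0..<n div m}"

lemma residue_class_eq:
  assumes m: "m \<ge> 1" "m dvd n" and i: "i \<in> {1..m}"
  shows "residue_class n m i = {y \<in> {1..n}. int m dvd int y - int i}"
proof
  obtain r where r: "n = m * r" using m by (metis dvdE)
  show "residue_class n m i \<subseteq> {y \<in> {1..n}. int m dvd int y - int i}"
  proof
    fix y assume "y \<in> residue_class n m i"
    then obtain k where k: "k < r" "y = i + k * m" unfolding residue_class_def using r m by auto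
    have "(k + 1) * m \<le> r * m" using k by (intro mult_le_mono1) simp
    then have "y \<le> n" using k i r by (simp add: algebra_simps)
    moreover have "int y - int i = int m * int k" using k by simp
    ultimately show "y \<in> {y \<in> {1..n}. int m dvd int y - int i}" using i k by auto
  qed
  show "{y \<in> {1..n}. int m dvd int y - int i} \<subseteq> residue_class n m i"
  proof
    fix y assume "y \<in> {y \<in> {1..n}. int m dvd int y - int i}"
    then have y: "y \<in> {1..n}" and d: "int m dvd int y - int i" by auto
    have "i \<le> y"
    proof (rule ccontr)
      assume "\<not> i \<le> y"
      then have "0 < int i - int y" "int i - int y < int m" using i y by auto
      moreover have "int m dvd int i - int y" using d by (metis dvd_minus_iff minus_diff_eq)
      ultimately show False using zdvd_imp_le by fastforce
    qed
    then have "int m dvd int (y - i)" using d by (simp add: of_nat_diff)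
    then have "m dvd y - i" by presburger
    then obtain k where k: "y - i = m * k" by (metis dvdE)
    have "y - i < n" using y i \<open>i \<le> y\<close> by auto
    then have "m * k < m * r" using k r by simp
    then have "k < n div m" using r m by simp
    moreover have "y = i + k * m" using k \<open>i \<le> y\<close> by (simp add: algebra_simps)
    ultimately show "y \<in> residue_class n m i" unfolding residue_class_def by auto
  qed
qed

locale circulant_critical = circulant +
  fixes p :: "nat list" and m :: nat
  assumes p_set: "set p = {t \<in> {1..n-1}. a t = mcm n (circ n a)}"
    and m_def: "m = Gcd (insert n (set p))"
begin

lemma set_p: "set p = {t. 1 \<le> t \<and> t < n \<and> a t = max_coeff n a}"
proof -
  have "set p = {t \<in> {1..n-1}. a t = max_coeff n a}" using p_set mcm_circ by simp
  also have "\<dots> = {t. 1 \<le> t \<and> t < n \<and> a t = max_coeff n a}" using n_pos by auto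
  finally show ?thesis .
qed

lemma m_dvd_n: "m dvd n"
  unfolding m_def by (rule Gcd_dvd) simp

lemma m_dvd_step: "t \<in> set p \<Longrightarrow> m dvd t"
  unfolding m_def by (rule Gcd_dvd) simp

lemma m_pos: "m \<ge> 1"
proof -
  have "m \<noteq> 0" using m_dvd_n n_pos by auto
  then show ?thesis by simp
qed

lemma m_le_n: "m \<le> n"
  using m_dvd_n n_pos by (simp add: dvd_imp_le)

lemmas residue_class_char = residue_class_eq[OF m_pos m_dvd_n]

lemma crit_edge_offset:
  assumes "(x, y) \<in> crit_edges n (circ n a)"
  shows "x \<in> {1..n}" "y \<in> {1..n}" "(y + n - x) mod n = 0 \<or> (y + n - x) mod n \<in> set p"
    "int n dvd (int x - 1 + int ((y + n - x) mod n)) - (int y - 1)"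
proof -
  show x: "x \<in> {1..n}" and y: "y \<in> {1..n}" using assms unfolding crit_edges_circ by auto
  define t where "t = (y + n - x) mod n"
  have "a t = max_coeff n a" using assms unfolding crit_edges_circ circ_def t_def by auto
  moreover have "t < n" unfolding t_def using n_pos by simp
  ultimately show "(y + n - x) mod n = 0 \<or> (y + n - x) mod n \<in> set p"
    unfolding t_def[symmetric] set_p by auto
  have "node n (x - 1 + t) = y" using node_offset[OF x y] unfolding t_def .
  then have "node_int n (int x - 1 + int t) = y"
    using x by (metis node_int_of_nat of_nat_add of_nat_diff of_nat_1 atLeastAtMost_iff)
  then show "int n dvd (int x - 1 + int ((y + n - x) mod n)) - (int y - 1)"
    using node_int_dvd[OF n_pos, of "int x - 1 + int t"] unfolding t_def by simp
qed

lemma crit_edge_congruent: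
  assumes "(x, y) \<in> crit_edges n (circ n a)"
  shows "int m dvd int y - int x"
proof -
  define t where "t = (y + n - x) mod n"
  have "int m dvd int t"
    using crit_edge_offset(3)[OF assms] m_dvd_step unfolding t_def[symmetric] by auto
  moreover have "int m dvd (int x - 1 + int t) - (int y - 1)"
    using crit_edge_offset(4)[OF assms] m_dvd_n unfolding t_def[symmetric]
    by (meson dvd_trans int_dvd_int_iff)
  ultimately have "int m dvd int t - ((int x - 1 + int t) - (int y - 1))" by (rule dvd_diff)
  then show ?thesis by simp
qed

lemma crit_edge_step:
  assumes x: "x \<in> {1..n}" and t: "t \<in> set p"
  shows "(x, node_int n (int x - 1 + int t)) \<in> crit_edges n (circ n a)"
proof -
  have t': "t < n" "a t = max_coeff n a" using t set_p by auto
  have "node_int n (int x - 1 + int t) = node n (x - 1 + t)"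
    using x by (metis node_int_of_nat of_nat_add of_nat_diff of_nat_1 atLeastAtMost_iff)
  moreover have "circ n a (node n (x - 1)) (node n (x - 1 + t)) = a t"
    using circ_node[OF n_pos] t' by simp
  ultimately show ?thesis
    unfolding crit_edges_circ using node_pred[OF x] x node_in_range[OF n_pos] t' by auto
qed

lemma mem_residue_class_self: "i \<in> {1..m} \<Longrightarrow> i \<in> residue_class n m i"
  using residue_class_char m_le_n by auto

lemma residue_class_subset: "i \<in> {1..m} \<Longrightarrow> residue_class n m i \<subseteq> {1..n}"
  using residue_class_char by auto

lemma node_int_in_residue_class:
  assumes i: "i \<in> {1..m}" and x: "x \<in> residue_class n m i" and z: "int m dvd z"
  shows "node_int n (int x - 1 + z) \<in> residue_class n m i"
proof -
  let ?y = "node_int n (int x - 1 + z)"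
  have "int n dvd (int x - 1 + z) - (int ?y - 1)" by (rule node_int_dvd[OF n_pos])
  then have "int m dvd (int x - 1 + z) - (int ?y - 1)"
    using m_dvd_n by (meson dvd_trans int_dvd_int_iff)
  moreover have "int m dvd int x - int i" using x residue_class_char[OF i] by auto
  ultimately have "int m dvd (int x - int i) + z - ((int x - 1 + z) - (int ?y - 1))"
    using z by (metis dvd_add dvd_diff)
  then have "int m dvd int ?y - int i" by simp
  then show ?thesis using residue_class_char[OF i] node_int_in_range[OF n_pos] by auto
qed

lemma mem_residue_class_of_node:
  assumes x: "x \<in> {1..n}"
  shows "x \<in> residue_class n m ((x - 1) mod m + 1)"
proof -
  let ?i = "(x - 1) mod m + 1"
  have i: "?i \<in> {1..m}" using m_pos by (simp add: Suc_leI)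
  have "?i \<le> x" using x by (metis Suc_eq_plus1 Suc_le_mono atLeastAtMost_iff le_diff_iff' le_add_diff_inverse2 mod_less_eq_dividend le_SucE Suc_diff_1 order.trans le_refl)
  moreover have "x - ?i = m * ((x - 1) div m)"
    using x by (simp add: minus_mod_eq_mult_div [symmetric])
  ultimately have "int x - int ?i = int m * int ((x - 1) div m)"
    by (metis of_nat_diff of_nat_mult)
  then show ?thesis using residue_class_char[OF i] x by auto
qed

lemma residue_classes_disjoint:
  assumes i: "i \<in> {1..m}" and j: "j \<in> {1..m}" and "i \<noteq> j"
  shows "residue_class n m i \<inter> residue_class n m j = {}"
proof (rule ccontr)
  assume "residue_class n m i \<inter> residue_class n m j \<noteq> {}"
  then obtain x where "x \<in> residue_class n m i" "x \<in> residue_class n m j" by auto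
  then have "int m dvd int x - int i" "int m dvd int x - int j"
    using residue_class_char[OF i] residue_class_char[OF j] by auto
  from dvd_diff[OF this] have "int m dvd int j - int i" by simp
  then have "int m dvd \<bar>int j - int i\<bar>" by simp
  moreover have "0 < \<bar>int j - int i\<bar>" "\<bar>int j - int i\<bar> < int m" using i j \<open>i \<noteq> j\<close> by auto
  ultimately show False using zdvd_imp_le by fastforce
qed

lemma crit_nodes_eq_residue_classes: "crit_nodes n (circ n a) = (\<Union>i\<in>{1..m}. residue_class n m i)"
proof -
  have "{1..n} \<subseteq> (\<Union>i\<in>{1..m}. residue_class n m i)"
  proof
    fix x assume x: "x \<in> {1..n}"
    have "(x - 1) mod m + 1 \<in> {1..m}" using m_pos by (simp add: Suc_leI)
    then show "x \<in> (\<Union>i\<in>{1..m}. residue_class n m i)" using mem_residue_class_of_node[OF x] by blast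
  qed
  then show ?thesis using residue_class_subset crit_nodes_circ by blast
qed

lemma crit_edges_within_residue_classes:
  "crit_edges n (circ n a) \<subseteq> (\<Union>i\<in>{1..m}. residue_class n m i \<times> residue_class n m i)"
proof safe
  fix x y assume e: "(x, y) \<in> crit_edges n (circ n a)"
  let ?i = "(x - 1) mod m + 1"
  have i: "?i \<in> {1..m}" using m_pos by (simp add: Suc_leI)
  have x: "x \<in> residue_class n m ?i" using mem_residue_class_of_node crit_edge_offset(1)[OF e] .
  then have "int m dvd int x - int ?i" using residue_class_char[OF i] by auto
  moreover have "int m dvd int y - int x" by (rule crit_edge_congruent[OF e])
  ultimately have "int m dvd (int y - int x) + (int x - int ?i)" by (rule dvd_add[rotated])
  also have "(int y - int x) + (int x - int ?i) = int y - int ?i" by simp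
  finally have "int m dvd int y - int ?i" .
  then have "y \<in> residue_class n m ?i" using residue_class_char[OF i] crit_edge_offset(2)[OF e] by auto
  then show "(x, y) \<in> (\<Union>i\<in>{1..m}. residue_class n m i \<times> residue_class n m i)" using x i by blast
qed

text \<open>Translation by \<open>j - i\<close> maps the \<open>i\<close>-th class onto the \<open>j\<close>-th and preserves the
  offsets \<open>y - x\<close>, hence the critical edges.\<close>

lemma residue_classes_isomorphic:
  assumes i: "i \<in> {1..m}" and j: "j \<in> {1..m}"
  shows "\<exists>f. bij_betw f (residue_class n m i) (residue_class n m j) \<and>
          (\<forall>x \<in> residue_class n m i. \<forall>y \<in> residue_class n m i.
             (x, y) \<in> crit_edges n (circ n a) \<longleftrightarrow> (f x, f y) \<in> crit_edges n (circ n a))"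
proof (intro exI conjI)
  let ?f = "\<lambda>x. x + j - i"
  have ge: "\<And>x. x \<in> residue_class n m i \<Longrightarrow> i \<le> x" unfolding residue_class_def by auto
  have img: "?f ` residue_class n m i = residue_class n m j"
    unfolding residue_class_def image_image by (rule image_cong) auto
  moreover have "inj_on ?f (residue_class n m i)"
  proof (rule inj_onI)
    fix x y assume "x \<in> residue_class n m i" "y \<in> residue_class n m i" "x + j - i = y + j - i"
    then show "x = y" using ge[of x] ge[of y] by simp
  qed
  ultimately show "bij_betw ?f (residue_class n m i) (residue_class n m j)"
    unfolding bij_betw_def by simp
  show "\<forall>x \<in> residue_class n m i. \<forall>y \<in> residue_class n m i.
      (x, y) \<in> crit_edges n (circ n a) \<longleftrightarrow> (?f x, ?f y) \<in> crit_edges n (circ n a)"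
  proof (intro ballI)
    fix x y assume x: "x \<in> residue_class n m i" and y: "y \<in> residue_class n m i"
    have "?f x \<in> residue_class n m j" "?f y \<in> residue_class n m j" using img x y by blast+
    then have "x \<in> {1..n}" "y \<in> {1..n}" "?f x \<in> {1..n}" "?f y \<in> {1..n}"
      using residue_class_subset[OF i] residue_class_subset[OF j] x y by blast+
    moreover have "?f y + n - ?f x = y + n - x" using ge[OF x] ge[OF y] by simp
    then have "circ n a (?f x) (?f y) = circ n a x y" unfolding circ_def by simp
    ultimately show "(x, y) \<in> crit_edges n (circ n a) \<longleftrightarrow> (?f x, ?f y) \<in> crit_edges n (circ n a)"
      unfolding crit_edges_circ by auto
  qed
qed

text \<open>The offsets by which every node of a class can reach, inside the class, the node
  shifted by that offset form a subgroup of the integers; it contains \<open>n\<close> and the steps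
  in \<open>p\<close>, hence \<open>m\<close>.\<close>

definition reachable_offsets :: "nat \<Rightarrow> int set" where
  "reachable_offsets i = {z. int m dvd z \<and> (\<forall>x \<in> residue_class n m i.
     (x, node_int n (int x - 1 + z)) \<in>
       (crit_edges n (circ n a) \<inter> residue_class n m i \<times> residue_class n m i)\<^sup>*)}"

context
  fixes i assumes i: "i \<in> {1..m}"
begin

lemma zero_mem_reachable_offsets: "0 \<in> reachable_offsets i"
  unfolding reachable_offsets_def using node_int_pred residue_class_subset[OF i] by auto

lemma reachable_offsets_add:
  assumes z: "z \<in> reachable_offsets i" and z': "z' \<in> reachable_offsets i"
  shows "z + z' \<in> reachable_offsets i"
proof -
  let ?R = "crit_edges n (circ n a) \<inter> residue_class n m i \<times> residue_class n m i"
  have "(x, node_int n (int x - 1 + (z + z'))) \<in> ?R\<^sup>*" if x: "x \<in> residue_class n m i" for x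
proof -
    let ?w = "node_int n (int x - 1 + z)"
    have w: "?w \<in> residue_class n m i"
      using node_int_in_residue_class[OF i x] z unfolding reachable_offsets_def by auto
    have "int ?w - 1 = (int x - 1 + z) mod int n" by (rule node_int_cong[OF n_pos])
    then have "node_int n (int ?w - 1 + z') = node_int n (int x - 1 + (z + z'))"
      unfolding node_int_def by (simp add: mod_add_left_eq add.assoc)
    moreover have "(x, ?w) \<in> ?R\<^sup>*" "(?w, node_int n (int ?w - 1 + z')) \<in> ?R\<^sup>*"
      using z z' x w unfolding reachable_offsets_def by auto
    ultimately show ?thesis by simp
  qed
  then show ?thesis using z z' unfolding reachable_offsets_def by auto
qed

lemma reachable_offsets_mult_n: "int n * k \<in> reachable_offsets i"
  unfolding reachable_offsets_def using m_dvd_n node_int_add_mult node_int_pred residue_class_subset[OF i]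
  by (auto simp: add.assoc)

lemma reachable_offsets_neg: "z \<in> reachable_offsets i \<Longrightarrow> - z \<in> reachable_offsets i"
  by (rule int_submonoid_neg_closed[OF zero_mem_reachable_offsets reachable_offsets_add
        reachable_offsets_mult_n n_pos])

lemma step_mem_reachable_offsets:
  assumes t: "t \<in> set p"
  shows "int t \<in> reachable_offsets i"
proof -
  have "(x, node_int n (int x - 1 + int t)) \<in>
      crit_edges n (circ n a) \<inter> residue_class n m i \<times> residue_class n m i"
    if x: "x \<in> residue_class n m i" for x
    using crit_edge_step[OF _ t] node_int_in_residue_class[OF i x] m_dvd_step[OF t] x
      residue_class_subset[OF i] by auto
  then show ?thesis unfolding reachable_offsets_def using m_dvd_step[OF t] by auto
qed

lemma m_mem_reachable_offsets: "int m \<in> reachable_offsets i"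
proof -
  have "int (Gcd (insert n (set p))) \<in> reachable_offsets i"
  proof (rule int_subgroup_Gcd_mem[OF zero_mem_reachable_offsets reachable_offsets_add reachable_offsets_neg])
    fix t assume "t \<in> insert n (set p)"
    then show "int t \<in> reachable_offsets i"
      using reachable_offsets_mult_n[of 1] step_mem_reachable_offsets by auto
  qed auto
  then show ?thesis unfolding m_def[symmetric] .
qed

lemma strongly_connected_residue_class:
  "strongly_connected_on (crit_edges n (circ n a)) (residue_class n m i)"
  unfolding strongly_connected_on_def
proof (intro conjI ballI)
  show "residue_class n m i \<noteq> {}" using mem_residue_class_self[OF i] by auto
next
  fix x y assume x: "x \<in> residue_class n m i" and y: "y \<in> residue_class n m i"
  let ?R = "crit_edges n (circ n a) \<inter> residue_class n m i \<times> residue_class n m i"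
  have "int m dvd int y - int i" "int m dvd int x - int i" using x y residue_class_char[OF i] by auto
  from dvd_diff[OF this] obtain k where "(int y - int i) - (int x - int i) = int m * k"
    by (rule dvdE)
  then have k: "int x - 1 + int m * k = int y - 1" by simp
  have "int m * k \<in> reachable_offsets i"
    using int_subgroup_mult_closed[OF zero_mem_reachable_offsets reachable_offsets_add
        reachable_offsets_neg m_mem_reachable_offsets, of k]
    by (simp add: mult.commute)
  then have "(x, node_int n (int x - 1 + int m * k)) \<in> ?R\<^sup>*"
    using x unfolding reachable_offsets_def by blast
  moreover have "node_int n (int x - 1 + int m * k) = y"
    unfolding k using node_int_pred residue_class_subset[OF i] y by blast
  ultimately show "(x, y) \<in> ?R\<^sup>*" by simp
qed

end

section \<open>The period\<close>

lemma mpow_steps_eq_one: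
  "set ss \<subseteq> set p \<Longrightarrow>
    mpow n (normalized n (circ n a)) (length ss) (node n u) (node n (u + sum_list ss)) = 1"
proof (induction ss arbitrary: u)
  case (Cons s ss)
  have s: "s < n" "a s = max_coeff n a" using Cons.prems set_p by auto
  have nodes: "node n u \<in> {1..n}" "node n (u + s) \<in> {1..n}"
    using node_in_range[OF n_pos] by auto
  have "normalized n (circ n a) (node n u) (node n (u + s)) = 1"
    unfolding normalized_def mcm_circ circ_node[OF n_pos] using s max_coeff_pos by simp
  then have "mpow n (normalized n (circ n a)) 1 (node n u) (node n (u + s)) = 1"
    using normalized.mpow_one nodes by simp
  moreover have "mpow n (normalized n (circ n a)) (length ss) (node n (u + s)) (node n (u + s + sum_list ss)) = 1"
    using Cons by auto
  ultimately have "mpow n (normalized n (circ n a)) (1 + length ss) (node n u) (node n (u + s + sum_list ss)) = 1"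
    by (rule normalized.mpow_add_eq_one[OF nodes(2)])
  then show ?case by (simp add: add.assoc del: mpow.simps)
qed simp

lemma mpow_closed_steps_eq_one:
  assumes "set ss \<subseteq> set p" "n dvd sum_list ss" "j \<in> {1..n}"
  shows "mpow n (normalized n (circ n a)) (length ss) j j = 1"
proof -
  obtain w where "sum_list ss = n * w" using assms(2) by (rule dvdE)
  then show ?thesis
    using mpow_steps_eq_one[OF assms(1), of "j - 1"] node_pred[OF assms(3)] node_add_mult by metis
qed

lemma closed_walk_step_walk:
  assumes i: "i \<in> {1..m}" and "ss \<noteq> []" and ss: "set ss \<subseteq> set p" and "n dvd sum_list ss"
  shows "closed_walk (crit_edges n (circ n a) \<inter> residue_class n m i \<times> residue_class n m i)
      (step_walk n (i - 1) ss)"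
  unfolding closed_walk_def
proof (intro conjI allI impI)
  show "step_walk n (i - 1) ss \<noteq> []" using \<open>ss \<noteq> []\<close> unfolding step_walk_def by simp
  have "m dvd sum_list (take k ss)" for k
    using ss set_take_subset[of k ss] m_dvd_step by (intro dvd_sum_list) auto
  then have in_class: "node n (i - 1 + sum_list (take k ss)) \<in> residue_class n m i" for k
    using node_int_in_residue_class[OF i mem_residue_class_self[OF i]] i
    by (metis int_dvd_int_iff node_int_of_nat of_nat_add of_nat_diff of_nat_1 atLeastAtMost_iff)
  fix k assume "k < length (step_walk n (i - 1) ss)"
  then have k: "k < length ss" unfolding step_walk_def by simp
  let ?u = "i - 1 + sum_list (take k ss)"
  have "ss ! k \<in> set p" using ss k nth_mem by blast
  then have s: "ss ! k < n" "a (ss ! k) = max_coeff n a" using set_p by auto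
  have sum_Suc: "sum_list (take (Suc k) ss) = sum_list (take k ss) + ss ! k"
    using take_Suc_conv_app_nth[OF k] by simp
  have next_node: "step_walk n (i - 1) ss ! ((k + 1) mod length (step_walk n (i - 1) ss))
      = node n (?u + ss ! k)"
  proof (cases "k + 1 < length ss")
    case True
    then show ?thesis unfolding step_walk_def using sum_Suc by (simp add: add.assoc)
  next
    case False
    then have "take (Suc k) ss = ss" using k by simp
    moreover obtain w where "sum_list ss = n * w" using \<open>n dvd sum_list ss\<close> by (rule dvdE)
    ultimately have "node n (?u + ss ! k) = node n (i - 1 + n * w)" using sum_Suc by (simp add: add.assoc)
    moreover have "k + 1 = length ss" using False k by simp
    then have "(k + 1) mod length ss = 0" by simp
    ultimately show ?thesis unfolding step_walk_def using node_add_mult \<open>ss \<noteq> []\<close> by simp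
  qed
  have "(node n ?u, node n (?u + ss ! k)) \<in> crit_edges n (circ n a)"
    unfolding crit_edges_circ using circ_node[OF n_pos, of a ?u "ss ! k"] s node_in_range[OF n_pos] by auto
  moreover have "node n (?u + ss ! k) \<in> residue_class n m i"
    using in_class[of "Suc k"] sum_Suc by (simp add: add.assoc)
  ultimately show "(step_walk n (i - 1) ss ! k, step_walk n (i - 1) ss ! ((k + 1) mod length (step_walk n (i - 1) ss)))
      \<in> crit_edges n (circ n a) \<inter> residue_class n m i \<times> residue_class n m i"
    using next_node in_class[of k] k unfolding step_walk_def by simp
qed

lemma cyclicity_residue_class_eqI:
  assumes "i \<in> {1..m}"
    and walks: "\<And>c. closed_walk (crit_edges n (circ n a)) c \<Longrightarrow> \<sigma> dvd length c"
    and cycles: "Gcd {length c | c. cycle_in (crit_edges n (circ n a) \<inter> residue_class n m i \<times> residue_class n m i) c} dvd \<sigma>"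
  shows "cyclicity (crit_edges n (circ n a) \<inter> residue_class n m i \<times> residue_class n m i) = \<sigma>"
proof -
  have "\<sigma> dvd Gcd {length c | c. cycle_in (crit_edges n (circ n a) \<inter> residue_class n m i \<times> residue_class n m i) c}"
    by (rule Gcd_greatest)
      (use walks closed_walk_mono[OF cycle_in_imp_closed_walk] in blast)
  then show ?thesis unfolding cyclicity_def using cycles by (simp add: dvd_antisym)
qed

text \<open>If \<open>a 0\<close> is maximal, every node carries a critical loop.\<close>

lemma
  assumes loop: "a 0 = mcm n (circ n a)"
  shows per_eq_one_if_loop: "per n (circ n a) = 1"
    and cyclicity_eq_one_if_loop:
      "i \<in> {1..m} \<Longrightarrow> cyclicity (crit_edges n (circ n a) \<inter> residue_class n m i \<times> residue_class n m i) = 1"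
proof -
  have loop_edge: "(j, j) \<in> crit_edges n (circ n a)" if "j \<in> {1..n}" for j
    unfolding crit_edges_circ using that loop mcm_circ by (simp add: circ_def)
  have "mpow n (normalized n (circ n a)) 1 j j = 1" if j: "j \<in> {1..n}" for j
    using loop_edge[OF j] normalized.mpow_one[OF j]
    unfolding crit_edges_eq_unit_edges unit_edges_def by simp
  then have "mpow n (normalized n (circ n a)) l j j = 1" if "j \<in> {1..n}" for j l
    using normalized.mpow_mult_eq_one[OF that, of 1 l] that by simp
  then show "per n (circ n a) = 1"
    unfolding per_eq_mpow_period by (intro normalized.mpow_period_eqI) auto
  assume i: "i \<in> {1..m}"
  have "i \<in> {1..n}" using i m_le_n by simp
  then have "cycle_in (crit_edges n (circ n a) \<inter> residue_class n m i \<times> residue_class n m i) [i]"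
    unfolding cycle_in_def using loop_edge mem_residue_class_self[OF i] by simp
  then have "Gcd {length c | c. cycle_in (crit_edges n (circ n a) \<inter> residue_class n m i \<times> residue_class n m i) c} dvd 1"
    by (metis (mono_tags, lifting) Gcd_dvd length_Cons list.size(3) mem_Collect_eq One_nat_def)
  then show "cyclicity (crit_edges n (circ n a) \<inter> residue_class n m i \<times> residue_class n m i) = 1"
    by (intro cyclicity_residue_class_eqI[OF i]) auto
qed

end

locale circulant_loopless = circulant_critical +
  assumes p_sorted: "sorted_wrt (>) p"
    and no_critical_loop: "a 0 \<noteq> mcm n (circ n a)"
begin

lemma p_nonempty: "p \<noteq> []"
proof -
  obtain t where t: "t < n" "a t = max_coeff n a" by (rule max_coeff_attained)
  moreover have "t \<noteq> 0" using t no_critical_loop unfolding mcm_circ by metis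
  ultimately have "t \<in> set p" unfolding set_p by simp
  then show ?thesis by auto
qed

lemma p_decreasing: "1 \<le> k \<Longrightarrow> k < length p \<Longrightarrow> p ! k < p ! (k - 1)"
  using sorted_wrt_nth_less[OF p_sorted, of "k - 1" k] by simp

lemma step_le_hd:
  assumes "s \<in> set p"
  shows "s \<le> p ! 0"
proof -
  obtain k where k: "k < length p" "s = p ! k" using assms by (auto simp: in_set_conv_nth)
  show ?thesis
  proof (cases k)
    case (Suc k')
    then show ?thesis using sorted_wrt_nth_less[OF p_sorted, of 0 k] k by simp
  qed (use k in simp)
qed

definition offset_gcd :: nat where
  "offset_gcd = Gcd (insert n {p ! 0 - p ! k | k. 1 \<le> k \<and> k < length p})"

definition period :: nat where
  "period = offset_gcd div gcd offset_gcd (p ! 0)"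

lemma offset_gcd_dvd_n: "offset_gcd dvd n"
  unfolding offset_gcd_def by (rule Gcd_dvd) simp

lemma offset_gcd_pos: "offset_gcd > 0"
proof -
  have "offset_gcd \<noteq> 0" using offset_gcd_dvd_n n_pos by (metis dvd_0_left_iff not_one_le_zero)
  then show ?thesis by simp
qed

lemma offset_gcd_dvd_diff:
  assumes "s \<in> set p"
  shows "offset_gcd dvd p ! 0 - s"
proof -
  obtain k where k: "k < length p" "s = p ! k" using assms by (auto simp: in_set_conv_nth)
  show ?thesis
  proof (cases k)
    case (Suc k')
    then show ?thesis unfolding offset_gcd_def using k by (intro Gcd_dvd) auto
  qed (use k in simp)
qed

lemma offset_gcd_dvd_int_diff:
  assumes "s \<in> set p"
  shows "int offset_gcd dvd int (p ! 0) - int s"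
proof -
  have "int offset_gcd dvd int (p ! 0 - s)" using offset_gcd_dvd_diff[OF assms] by (simp only: int_dvd_int_iff)
  then show ?thesis using step_le_hd[OF assms] by (simp add: of_nat_diff)
qed

lemma gcd_offset_gcd_dvd_step:
  assumes "s \<in> set p"
  shows "gcd offset_gcd (p ! 0) dvd s"
proof -
  have "gcd offset_gcd (p ! 0) dvd p ! 0 - s"
    using offset_gcd_dvd_diff[OF assms] by (rule dvd_trans[rotated]) simp
  from dvd_diff_nat[OF gcd_dvd2 this] have "gcd offset_gcd (p ! 0) dvd p ! 0 - (p ! 0 - s)" .
  then show ?thesis using step_le_hd[OF assms] by simp
qed

lemma offset_gcd_dvd_consecutive_diff:
  assumes "1 \<le> k" "k < length p"
  shows "offset_gcd dvd p ! (k - 1) - p ! k"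
proof -
  have in_p: "p ! k \<in> set p" "p ! (k - 1) \<in> set p" using assms by auto
  have "offset_gcd dvd (p ! 0 - p ! k) - (p ! 0 - p ! (k - 1))"
    using offset_gcd_dvd_diff[OF in_p(1)] offset_gcd_dvd_diff[OF in_p(2)] by (rule dvd_diff_nat)
  then show ?thesis using p_decreasing[OF assms] step_le_hd[OF in_p(2)] by simp
qed

lemma period_mult_gcd: "period * gcd offset_gcd (p ! 0) = offset_gcd"
  unfolding period_def by simp

lemma period_pos: "period > 0"
  using period_mult_gcd offset_gcd_pos by (cases period) auto

lemma period_dvd_n: "period dvd n"
  using period_mult_gcd offset_gcd_dvd_n by (metis dvd_mult_left)

lemma period_dvd_iff: "period dvd t \<longleftrightarrow> offset_gcd dvd t * p ! 0"
  unfolding period_def using div_gcd_dvd_iff[OF offset_gcd_pos] .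

text \<open>Since there are no critical loops, every critical step is congruent to \<open>p ! 0\<close> modulo
  \<open>offset_gcd\<close>.\<close>

lemma mpow_eq_one_imp_cong:
  assumes "i \<in> {1..n}" "j \<in> {1..n}" "mpow n (normalized n (circ n a)) t i j = 1"
  shows "int offset_gcd dvd (int j - int i) - int t * int (p ! 0)"
  using assms(2,3)
proof (induction t arbitrary: j)
  case 0
  then show ?case by (simp split: if_splits)
next
  case (Suc t)
  obtain k where k: "k \<in> {1..n}" "mpow n (normalized n (circ n a)) t i k = 1"
    and "normalized n (circ n a) k j = 1"
    using Suc.prems(2) by (rule normalized.mpow_Suc_eq_one_E)
  then have edge: "(k, j) \<in> crit_edges n (circ n a)"
    using Suc.prems(1) unfolding crit_edges_eq_unit_edges unit_edges_def by simp
  define s where "s = (j + n - k) mod n"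
  have "a s = max_coeff n a" using edge unfolding crit_edges_circ circ_def s_def by simp
  then have "s \<noteq> 0" using no_critical_loop unfolding mcm_circ by metis
  then have "s \<in> set p" using crit_edge_offset(3)[OF edge] unfolding s_def by auto
  then have "int offset_gcd dvd int (p ! 0) - int s" by (rule offset_gcd_dvd_int_diff)
  moreover have "int offset_gcd dvd (int k - 1 + int s) - (int j - 1)"
    using crit_edge_offset(4)[OF edge] offset_gcd_dvd_n unfolding s_def
    by (meson dvd_trans int_dvd_int_iff)
  moreover have "int offset_gcd dvd (int k - int i) - int t * int (p ! 0)"
    using Suc.IH[OF k(1,2)] .
  ultimately have "int offset_gcd dvd ((int k - int i) - int t * int (p ! 0))
      - ((int k - 1 + int s) - (int j - 1)) - (int (p ! 0) - int s)"
    by (metis dvd_diff)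
  also have "\<dots> = (int j - int i) - int (Suc t) * int (p ! 0)" by (simp add: algebra_simps)
  finally show ?case .
qed

lemma period_dvd_if_mpow_diag_eq_one:
  assumes "i \<in> {1..n}" "mpow n (normalized n (circ n a)) t i i = 1"
  shows "period dvd t"
proof -
  have "int offset_gcd dvd int (t * p ! 0)" using mpow_eq_one_imp_cong[OF assms(1,1,2)] by simp
  then show ?thesis unfolding period_dvd_iff by presburger
qed

definition step_excesses :: "int set" where
  "step_excesses = {y. \<exists>ss. set ss \<subseteq> set p \<and>
     int n dvd int (sum_list ss) - int (length ss) * int (p ! 0) - y}"

lemma zero_mem_step_excesses: "0 \<in> step_excesses"
  unfolding step_excesses_def by (intro CollectI exI[of _ "[]"]) simp

lemma step_excesses_add:
  assumes "x \<in> step_excesses" "y \<in> step_excesses"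
  shows "x + y \<in> step_excesses"
proof -
  obtain ss ss' where ss: "set ss \<subseteq> set p" "int n dvd int (sum_list ss) - int (length ss) * int (p ! 0) - x"
    and ss': "set ss' \<subseteq> set p" "int n dvd int (sum_list ss') - int (length ss') * int (p ! 0) - y"
    using assms unfolding step_excesses_def by blast
  have "int n dvd (int (sum_list ss) - int (length ss) * int (p ! 0) - x)
      + (int (sum_list ss') - int (length ss') * int (p ! 0) - y)"
    using ss ss' by (intro dvd_add)
  then have "int n dvd int (sum_list (ss @ ss')) - int (length (ss @ ss')) * int (p ! 0) - (x + y)"
    by (simp add: algebra_simps)
  then show ?thesis unfolding step_excesses_def using ss ss' by (intro CollectI exI[of _ "ss @ ss'"]) auto
qed

lemma step_excesses_mult_n: "int n * k \<in> step_excesses"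
  unfolding step_excesses_def by (intro CollectI exI[of _ "[]"]) simp

lemma step_excesses_neg: "x \<in> step_excesses \<Longrightarrow> - x \<in> step_excesses"
  by (rule int_submonoid_neg_closed[OF zero_mem_step_excesses step_excesses_add step_excesses_mult_n n_pos])

lemma offset_gcd_mem_step_excesses: "int offset_gcd \<in> step_excesses"
  unfolding offset_gcd_def
proof (rule int_subgroup_Gcd_mem[OF zero_mem_step_excesses step_excesses_add step_excesses_neg])
  fix x assume "x \<in> insert n {p ! 0 - p ! k | k. 1 \<le> k \<and> k < length p}"
  then consider "x = n" | k where "k < length p" "x = p ! 0 - p ! k" by auto
  then show "int x \<in> step_excesses"
  proof cases
    case 1
    then show ?thesis using step_excesses_mult_n[of 1] by simp
  next
    case 2
    have "int (p ! k) - int (p ! 0) \<in> step_excesses"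
      unfolding step_excesses_def using 2 by (intro CollectI exI[of _ "[p ! k]"]) auto
    from step_excesses_neg[OF this] show ?thesis
      using 2 step_le_hd[of "p ! k"] by (simp add: of_nat_diff)
  qed
next
  have "{p ! 0 - p ! k | k. 1 \<le> k \<and> k < length p} = (\<lambda>k. p ! 0 - p ! k) ` {k. 1 \<le> k \<and> k < length p}"
    by auto
  then show "finite (insert n {p ! 0 - p ! k | k. 1 \<le> k \<and> k < length p})" by simp
qed

text \<open>There is a closed critical walk of length \<open>period + n K\<close>: realize the excess
  \<open>- period * p ! 0 \<equiv> - (p ! 0 div gcd offset_gcd (p ! 0)) * offset_gcd\<close> by some steps and
  pad with copies of the step \<open>p ! 0\<close>, which have zero excess.\<close>

lemma closed_steps_period:
  obtains ss K where "set ss \<subseteq> set p" "ss \<noteq> []" "n dvd sum_list ss" "length ss = period + n * K"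
proof -
  have "(- int (p ! 0 div gcd offset_gcd (p ! 0))) * int offset_gcd \<in> step_excesses"
    by (rule int_subgroup_mult_closed[OF zero_mem_step_excesses step_excesses_add step_excesses_neg
          offset_gcd_mem_step_excesses])
  moreover have "offset_gcd * (p ! 0 div gcd offset_gcd (p ! 0)) = period * p ! 0"
    unfolding period_def by (simp add: div_mult_swap_dvd)
  then have "(- int (p ! 0 div gcd offset_gcd (p ! 0))) * int offset_gcd = - (int period * int (p ! 0))"
    by (metis mult.commute mult_minus_left of_nat_mult)
  ultimately obtain s0 where s0: "set s0 \<subseteq> set p"
    "int n dvd int (sum_list s0) - int (length s0) * int (p ! 0) + int period * int (p ! 0)"
    unfolding step_excesses_def by auto
  define c where "c = nat ((int period - int (length s0)) mod int n)"
  have c: "int n dvd int c - (int period - int (length s0))"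
    unfolding c_def using n_pos by (simp add: mod_eq_dvd_iff[symmetric])
  define ss where "ss = s0 @ replicate c (p ! 0) @ replicate n (p ! 0)"
  have "set ss \<subseteq> set p" unfolding ss_def using s0(1) p_nonempty by auto
  moreover have "ss \<noteq> []" unfolding ss_def using n_pos by simp
  moreover have "int n dvd (int (sum_list s0) - int (length s0) * int (p ! 0) + int period * int (p ! 0))
      + (int c - (int period - int (length s0))) * int (p ! 0) + int n * int (p ! 0)"
    using dvd_add[OF dvd_add[OF s0(2) dvd_mult2[OF c, of "int (p ! 0)"]] dvd_triv_left] .
  then have "int n dvd int (sum_list ss)"
    unfolding ss_def by (simp add: sum_list_replicate algebra_simps)
  then have "n dvd sum_list ss" by presburger
  moreover have "int n dvd int (length ss) - int period"
    using dvd_add[OF c dvd_refl[of "int n"]] unfolding ss_def by (simp add: algebra_simps)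
  moreover have "period \<le> length ss"
    using dvd_imp_le[OF period_dvd_n] n_pos unfolding ss_def by simp
  ultimately show ?thesis
    using that by (metis (no_types, lifting) dvdE int_dvd_int_iff le_add_diff_inverse of_nat_diff)
qed

lemma diag_eventually_one:
  assumes j: "j \<in> {1..n}"
  shows "\<exists>J. \<forall>l \<ge> J. period dvd l \<longrightarrow> mpow n (normalized n (circ n a)) l j j = 1"
proof -
  obtain ss K where ss: "set ss \<subseteq> set p" "n dvd sum_list ss" "length ss = period + n * K"
    by (rule closed_steps_period)
  have short: "mpow n (normalized n (circ n a)) (period + n * K) j j = 1"
    using mpow_closed_steps_eq_one[OF ss(1,2) j] ss(3) by simp
  have "mpow n (normalized n (circ n a)) (length (replicate n (p ! 0))) j j = 1"
    using p_nonempty by (intro mpow_closed_steps_eq_one[OF _ _ j]) (auto simp: sum_list_replicate)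
  then have full: "mpow n (normalized n (circ n a)) n j j = 1" by simp
  obtain q where q: "n = period * q" using period_dvd_n by (rule dvdE)
  have q0: "q > 0" using q n_pos by (metis gr0I mult_0_right not_one_le_zero)
  show ?thesis
  proof (intro exI[of _ "period * (q * (q * K))"] allI impI)
    fix l assume l: "period * (q * (q * K)) \<le> l" "period dvd l"
    obtain h where h: "l = period * h" using l(2) by (rule dvdE)
    have "q * (q * K) \<le> h" using l(1) h period_pos by simp
    define u where "u = h div q"
    define b where "b = h mod q"
    have "b < q" unfolding b_def using q0 by simp
    have "q * (q * K) div q \<le> h div q" using \<open>q * (q * K) \<le> h\<close> by (rule div_le_mono)
    then have "q * K \<le> u" unfolding u_def using q0 by simp
    moreover have "b * K \<le> q * K" using \<open>b < q\<close> by simp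
    ultimately have bK: "b * K \<le> u" by linarith
    text \<open>Write \<open>l = n (u - b K) + b (period + n K)\<close>.\<close>
    have "n * (u - b * K) + n * (b * K) = n * u" using bK by (simp add: diff_mult_distrib2)
    then have "n * (u - b * K) + b * (period + n * K) = n * u + b * period" by (simp add: algebra_simps)
    also have "\<dots> = period * (q * u + b)" using q by (simp add: algebra_simps)
    also have "q * u + b = h" unfolding u_def b_def by simp
    finally have "l = (u - b * K) * n + b * (period + n * K)" using h by (simp add: mult.commute)
    moreover have "mpow n (normalized n (circ n a)) ((u - b * K) * n) j j = 1"
      using normalized.mpow_mult_eq_one[OF j full] .
    moreover have "mpow n (normalized n (circ n a)) (b * (period + n * K)) j j = 1"
      using normalized.mpow_mult_eq_one[OF j short] .
    ultimately show "mpow n (normalized n (circ n a)) l j j = 1"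
      using normalized.mpow_add_eq_one[OF j] by simp
  qed
qed

lemma per_eq_period: "per n (circ n a) = period"
  unfolding per_eq_mpow_period
proof (rule normalized.mpow_period_eqI[OF period_pos diag_eventually_one])
  fix t assume "mpow n (normalized n (circ n a)) t 1 1 = 1"
  then show "period dvd t" using period_dvd_if_mpow_diag_eq_one[of 1 t] n_pos by simp
qed

lemma cyclicity_eq_period:
  assumes i: "i \<in> {1..m}"
  shows "cyclicity (crit_edges n (circ n a) \<inter> residue_class n m i \<times> residue_class n m i) = period"
proof (rule cyclicity_residue_class_eqI[OF i])
  fix c assume c: "closed_walk (crit_edges n (circ n a)) c"
  then have "c ! 0 \<in> {1..n}"
    unfolding closed_walk_def crit_edges_circ by auto
  then show "period dvd length c"
    using period_dvd_if_mpow_diag_eq_one normalized.closed_walk_mpow_eq_one c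
    unfolding crit_edges_eq_unit_edges by blast
next
  let ?G = "Gcd {length c | c. cycle_in (crit_edges n (circ n a) \<inter> residue_class n m i \<times> residue_class n m i) c}"
  have G: "?G dvd length ss" if "ss \<noteq> []" "set ss \<subseteq> set p" "n dvd sum_list ss" for ss
    using cycle_lengths_Gcd_dvd_closed_walk_length[OF closed_walk_step_walk[OF i that]] by simp
  obtain ss K where ss: "set ss \<subseteq> set p" "ss \<noteq> []" "n dvd sum_list ss" "length ss = period + n * K"
    by (rule closed_steps_period)
  have "?G dvd n"
    using G[of "replicate n (p ! 0)"] n_pos p_nonempty by (simp add: sum_list_replicate)
  moreover have "?G dvd period + n * K" using G[OF ss(2,1,3)] ss(4) by simp
  ultimately show "?G dvd period" by (simp add: dvd_add_left_iff)
qed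

lemma Gcd_eq_periodI:
  assumes n_term: "n div gcd n (p ! 0) \<in> T"
    and multiples: "\<And>t. t \<in> T \<Longrightarrow> offset_gcd dvd t * p ! 0"
    and diffs: "\<And>k. 1 \<le> k \<Longrightarrow> k < length p \<Longrightarrow> Gcd T * gcd offset_gcd (p ! 0) dvd p ! 0 - p ! k"
  shows "Gcd T = period"
proof -
  have "period dvd Gcd T" by (rule Gcd_greatest) (use multiples period_dvd_iff in auto)
  moreover have "Gcd T * gcd offset_gcd (p ! 0) dvd Gcd (insert n {p ! 0 - p ! k | k. 1 \<le> k \<and> k < length p})"
  proof (rule Gcd_greatest)
    fix x assume x: "x \<in> insert n {p ! 0 - p ! k | k. 1 \<le> k \<and> k < length p}"
    have "gcd offset_gcd (p ! 0) dvd gcd n (p ! 0)"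
      using offset_gcd_dvd_n by (intro gcd_greatest) (auto intro: dvd_trans[OF gcd_dvd1])
    then show "Gcd T * gcd offset_gcd (p ! 0) dvd x"
      using x diffs Gcd_dvd[OF n_term] by (auto intro: mult_dvd_if_dvd_div[of _ n "gcd n (p ! 0)"])
  qed
  then have "Gcd T * gcd offset_gcd (p ! 0) dvd period * gcd offset_gcd (p ! 0)"
    by (simp only: period_mult_gcd offset_gcd_def[symmetric])
  then have "Gcd T dvd period" using offset_gcd_pos by simp
  ultimately show ?thesis by (simp add: dvd_antisym)
qed

lemma offset_gcd_dvd_n_term: "offset_gcd dvd n div gcd n (p ! 0) * p ! 0"
  using offset_gcd_dvd_n by (intro dvd_div_mult_if_dvd) auto

lemma period_eq_Gcd_diffs_div_gcd:
  "Gcd (insert (n div gcd n (p ! 0)) {(p ! 0 - p ! k) div gcd (p ! 0) (p ! k) | k. 1 \<le> k \<and> k < length p})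
    = period"
proof (rule Gcd_eq_periodI)
  fix t assume "t \<in> insert (n div gcd n (p ! 0)) {(p ! 0 - p ! k) div gcd (p ! 0) (p ! k) | k. 1 \<le> k \<and> k < length p}"
  then consider "t = n div gcd n (p ! 0)"
    | k where "k < length p" "t = (p ! 0 - p ! k) div gcd (p ! 0) (p ! k)"
    by auto
  then show "offset_gcd dvd t * p ! 0"
  proof cases
    case 2
    then show ?thesis using offset_gcd_dvd_diff[of "p ! k"]
      by (auto intro!: dvd_div_mult_if_dvd intro: dvd_diff_nat)
  qed (use offset_gcd_dvd_n_term in simp)
next
  fix k assume k: "1 \<le> k" "k < length p"
  show "Gcd (insert (n div gcd n (p ! 0)) {(p ! 0 - p ! k) div gcd (p ! 0) (p ! k) | k. 1 \<le> k \<and> k < length p})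
      * gcd offset_gcd (p ! 0) dvd p ! 0 - p ! k"
    using k gcd_offset_gcd_dvd_step[of "p ! k"]
    by (intro mult_dvd_if_dvd_div[of _ _ "gcd (p ! 0) (p ! k)"] Gcd_dvd dvd_diff_nat) auto
qed simp

lemma period_eq_Gcd_consecutive_diffs:
  "Gcd (insert (n div gcd n (p ! 0))
      {(p ! (k - 1) - p ! k) div gcd (p ! (k - 1)) (p ! k) | k. 1 \<le> k \<and> k < length p}) = period"
proof (rule Gcd_eq_periodI)
  fix t assume "t \<in> insert (n div gcd n (p ! 0))
      {(p ! (k - 1) - p ! k) div gcd (p ! (k - 1)) (p ! k) | k. 1 \<le> k \<and> k < length p}"
  then consider "t = n div gcd n (p ! 0)"
    | k where "1 \<le> k" "k < length p" "t = (p ! (k - 1) - p ! k) div gcd (p ! (k - 1)) (p ! k)"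
    by auto
  then show "offset_gcd dvd t * p ! 0"
  proof cases
    case 1
    then show ?thesis using offset_gcd_dvd_n_term by simp
  next
    case 2
    have in_p: "p ! (k - 1) \<in> set p" using 2 by simp
    have "offset_gcd dvd t * p ! (k - 1)"
      using offset_gcd_dvd_consecutive_diff[OF 2(1,2)]
      unfolding 2(3) by (rule dvd_div_mult_if_dvd[OF _ dvd_diff_nat[OF gcd_dvd1 gcd_dvd2]]) simp
    moreover have "offset_gcd dvd t * (p ! 0 - p ! (k - 1))"
      using offset_gcd_dvd_diff[OF in_p] by simp
    ultimately have "offset_gcd dvd t * p ! (k - 1) + t * (p ! 0 - p ! (k - 1))" by (rule dvd_add)
    then show ?thesis using step_le_hd[OF in_p] by (simp add: add_mult_distrib2[symmetric])
  qed
next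
  fix k assume k: "1 \<le> k" "k < length p"
  let ?T = "insert (n div gcd n (p ! 0))
      {(p ! (k - 1) - p ! k) div gcd (p ! (k - 1)) (p ! k) | k. 1 \<le> k \<and> k < length p}"
  have step: "Gcd ?T * gcd offset_gcd (p ! 0) dvd p ! (k - 1) - p ! k" if k: "1 \<le> k" "k < length p" for k
  proof (rule mult_dvd_if_dvd_div)
    show "Gcd ?T dvd (p ! (k - 1) - p ! k) div gcd (p ! (k - 1)) (p ! k)"
      using k by (intro Gcd_dvd) auto
    show "gcd offset_gcd (p ! 0) dvd gcd (p ! (k - 1)) (p ! k)"
      using k gcd_offset_gcd_dvd_step[of "p ! k"] gcd_offset_gcd_dvd_step[of "p ! (k - 1)"] by simp
    show "gcd (p ! (k - 1)) (p ! k) dvd p ! (k - 1) - p ! k"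
      by (rule dvd_diff_nat) simp_all
  qed
  show "Gcd ?T * gcd offset_gcd (p ! 0) dvd p ! 0 - p ! k"
    using dvd_hd_diff_if_dvd_consecutive_diffs[OF p_sorted step k(2)] .
qed simp

lemma period_eq_Gcd_diffs_div_Gcd_prefix:
  "Gcd (insert (n div gcd n (p ! 0))
      {(p ! 0 - p ! k) div Gcd (insert n (set (take (k + 1) p))) | k. 1 \<le> k \<and> k < length p}) = period"
proof (rule Gcd_eq_periodI)
  fix t assume "t \<in> insert (n div gcd n (p ! 0))
      {(p ! 0 - p ! k) div Gcd (insert n (set (take (k + 1) p))) | k. 1 \<le> k \<and> k < length p}"
  then consider "t = n div gcd n (p ! 0)"
    | k where "k < length p" "t = (p ! 0 - p ! k) div Gcd (insert n (set (take (k + 1) p)))"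
    by auto
  then show "offset_gcd dvd t * p ! 0"
  proof cases
    case 2
    then show ?thesis
      using offset_gcd_dvd_diff[of "p ! k"] Gcd_insert_take_dvd_nth[of 0 k p n] Gcd_insert_take_dvd_nth[of k k p n]
      by (auto intro!: dvd_div_mult_if_dvd intro: dvd_diff_nat)
  qed (use offset_gcd_dvd_n_term in simp)
next
  fix k assume k: "1 \<le> k" "k < length p"
  let ?T = "insert (n div gcd n (p ! 0))
      {(p ! 0 - p ! k) div Gcd (insert n (set (take (k + 1) p))) | k. 1 \<le> k \<and> k < length p}"
  let ?X = "Gcd (insert n (set (take (k + 1) p)))"
  show "Gcd ?T * gcd offset_gcd (p ! 0) dvd p ! 0 - p ! k"
  proof (rule mult_dvd_if_dvd_div)
    show "Gcd ?T dvd (p ! 0 - p ! k) div ?X" using k by (intro Gcd_dvd) auto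
    show "gcd offset_gcd (p ! 0) dvd ?X"
      using dvd_trans[OF gcd_dvd1 offset_gcd_dvd_n] gcd_offset_gcd_dvd_step
      by (auto intro!: Gcd_greatest dest: in_set_takeD)
    have "?X dvd p ! 0" "?X dvd p ! k" using k Gcd_insert_take_dvd_nth by auto
    then show "?X dvd p ! 0 - p ! k" by (rule dvd_diff_nat)
  qed
qed simp

end

theorem proposition3:
  fixes n :: nat and a :: "nat \<Rightarrow> real" and p :: "nat list" and m :: nat
    and S :: "nat \<Rightarrow> nat set"
  assumes n_pos: "n \<ge> 1"
    and nonneg: "\<forall>t < n. a t \<ge> 0"
    and nonzero: "\<exists>t < n. a t \<noteq> 0"
    and p_sorted: "sorted_wrt (>) p"
    and p_set: "set p = {t \<in> {1..n-1}. a t = mcm n (circ n a)}"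
    and m_def: "m = Gcd (insert n (set p))"
    and S_def: "\<forall>i. S i = (\<lambda>k. i + k * m) ` {0..<n div m}"
  shows
    "crit_nodes n (circ n a) = (\<Union>i \<in> {1..m}. S i)
     \<and> (\<forall>i \<in> {1..m}. \<forall>j \<in> {1..m}. i \<noteq> j \<longrightarrow> S i \<inter> S j = {})
     \<and> crit_edges n (circ n a) \<subseteq> (\<Union>i \<in> {1..m}. S i \<times> S i)
     \<and> (\<forall>i \<in> {1..m}. strongly_connected_on (crit_edges n (circ n a)) (S i))
     \<and> (\<forall>i \<in> {1..m}. \<forall>j \<in> {1..m}. \<exists>f. bij_betw f (S i) (S j) \<and>
          (\<forall>x \<in> S i. \<forall>y \<in> S i. (x, y) \<in> crit_edges n (circ n a) \<longleftrightarrow>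
                                 (f x, f y) \<in> crit_edges n (circ n a)))
     \<and> (\<forall>i \<in> {1..m}. cyclicity (crit_edges n (circ n a) \<inter> S i \<times> S i) = per n (circ n a))
     \<and> (a 0 = mcm n (circ n a) \<longrightarrow> per n (circ n a) = 1)
     \<and> (a 0 \<noteq> mcm n (circ n a) \<longrightarrow>
          per n (circ n a) =
            Gcd (insert (n div gcd n (p ! 0))
                 {(p ! 0 - p ! k) div gcd (p ! 0) (p ! k) | k. 1 \<le> k \<and> k < length p})
        \<and> per n (circ n a) =
            Gcd (insert (n div gcd n (p ! 0))
                 {(p ! (k - 1) - p ! k) div gcd (p ! (k - 1)) (p ! k) | k. 1 \<le> k \<and> k < length p})
        \<and> per n (circ n a) =
            Gcd (insert (n div gcd n (p ! 0))
                 {(p ! 0 - p ! k) div Gcd (insert n (set (take (k + 1) p))) | k. 1 \<le> k \<and> k < length p}))"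
proof -
  interpret circulant_critical n a p m
    by unfold_locales (fact n_pos nonneg nonzero p_set m_def)+
  have loopless: "circulant_loopless n a p m" if "a 0 \<noteq> mcm n (circ n a)"
    by unfold_locales (fact p_sorted that)+
  have S: "S = residue_class n m" by (rule ext) (simp add: S_def residue_class_def)
  show ?thesis
    unfolding S
    apply (intro conjI)
    subgoal by (rule crit_nodes_eq_residue_classes)
    subgoal using residue_classes_disjoint by blast
    subgoal by (rule crit_edges_within_residue_classes)
    subgoal using strongly_connected_residue_class by blast
    subgoal using residue_classes_isomorphic by blast
    subgoal
      using cyclicity_eq_one_if_loop per_eq_one_if_loop
        circulant_loopless.cyclicity_eq_period[OF loopless] circulant_loopless.per_eq_period[OF loopless]
      by (cases "a 0 = mcm n (circ n a)") simp_all
    subgoal using per_eq_one_if_loop by blast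
    subgoal
      using circulant_loopless.per_eq_period[OF loopless]
        circulant_loopless.period_eq_Gcd_diffs_div_gcd[OF loopless]
        circulant_loopless.period_eq_Gcd_consecutive_diffs[OF loopless]
        circulant_loopless.period_eq_Gcd_diffs_div_Gcd_prefix[OF loopless]
      by simp
    done
qed

end
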